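(* Let $\mathcal{M}=(S,A,\Delta,T,\rho)$ be a w\~pMDP whose target states are $T=\{t_0,\dots,t_n\}$ with $0=\rho(t_0)<\rho(t_1)<\dots<\rho(t_n)$, and let $\mathcal{G}(\mathcal{M})=(V,E)$. Let $\mathcal{N}$ be the \~pMDP obtained from $\mathcal{M}$ by adding two fresh states $\mathit{fin},\mathit{fail}$ (the only target states of $\mathcal{N}$), a fresh action $a\notin A$, keeping all transitions of $\Delta$, and adding the transitions $(t_i,a,\mathit{fin})$ and $(t_i,a,t_{i-1})$ for every $i\in\{1,\dots,n\}$ and $(t_0,a,\mathit{fail})$ (so each $t_i$ is a non-target state of $\mathcal{N}$). Then for every $v\in V$ and every $W\subseteq V$: $v\trianglelefteq W$ holds in $\mathcal{M}$ if and only if $v\trianglelefteq W$ holds in $\mathcal{N}$.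
   Context: A weighted parametric MDP (wpMDP) is $(S,A,X,\delta,T,\rho)$: finite states $S$, actions $A$, parameters $X$, targets $T\subseteq S$ (no outgoing transitions), $\delta:(S\setminus T)\times A\times S\to\mathbb{Q}[X]$, weights $\rho:T\to\mathbb{Q}$. A weighted trivially parametric MDP (w\~pMDP) is a wpMDP where every $\delta(s,a,s')$ is either syntactically $0$ or a parameter used on no other transition; it is written $(S,A,\Delta,T,\rho)$ with $\Delta\subseteq (S\setminus T)\times A\times S$ the set of transitions with nonzero polynomial. A \~pMDP is a w\~pMDP with $T=\{\mathit{fin},\mathit{fail}\}$, $\rho(\mathit{fin})=1$, $\rho(\mathit{fail})=0$. Its graph $\mathcal{G}=(V,E)$ has $V=S\cup((S\setminus T)\times A)$, an edge $((s,a),s')$ iff $(s,a,s')\in\Delta$, and an edge $(s,(s,a))$ iff $(s,a,s')\in\Delta$ for some $s'$ other than the zero-weight target $\mathit{fail}$; $vE$ is the successor set. Graph-preserving valuations are exactly the assignments, to every $(s,a)$ with $s\notin T$, of a probability distribution with full support on $\{s':(s,a,s')\in\Delta\}$ (if this set is empty, $(s,a)$ moves to the zero-weight target with probability $1$). A strategy $\sigma:S\setminus T\to A$ and a valuation $\mathsf{val}$ induce a Markov chain; $\mathrm{Rew}^\sigma_{\mathsf{val}}(s)=\sum_{t\in T}\rho(t)\mathbb{P}^s[\Diamond t]$ for states, $\mathrm{Rew}^\sigma_{\mathsf{val}}((s,a))=\sum_{s'}\mathsf{val}_{(s,a)}(s')\mathrm{Rew}^\sigma_{\mathsf{val}}(s')$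 for state-action pairs, and $\mathrm{Rew}^*_{\mathsf{val}}(v)=\max_\sigma\mathrm{Rew}^\sigma_{\mathsf{val}}(v)$. Never-worse relation: $v\trianglelefteq W$ iff for every graph-preserving valuation $\mathsf{val}$ there is $w\in W$ with $\mathrm{Rew}^*_{\mathsf{val}}(v)\le\mathrm{Rew}^*_{\mathsf{val}}(w)$. *)

theory Defs
  imports Complex_Main "HOL-Library.FuncSet"
begin

text \<open>A weighted trivially parametric MDP is given by the components
  S (states), A (actions), Delta (transitions with nonzero polynomial),
  T (targets), rho (weights).\<close>

definition wtpMDP ::
  "'s set \<Rightarrow> 'a set \<Rightarrow> ('s \<times> 'a \<times> 's) set \<Rightarrow> 's set \<Rightarrow> ('s \<Rightarrow> real) \<Rightarrow> bool" where
  "wtpMDP S A Delta T rho \<longleftrightarrow>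
     finite S \<and> finite A \<and> A \<noteq> {} \<and> T \<subseteq> S \<and>
     Delta \<subseteq> (S - T) \<times> A \<times> S \<and> (\<forall>t\<in>T. rho t \<in> \<rat>)"

definition succs :: "('s \<times> 'a \<times> 's) set \<Rightarrow> 's \<Rightarrow> 'a \<Rightarrow> 's set" where
  "succs Delta s a = {s'. (s, a, s') \<in> Delta}"

text \<open>If there is no successor the pair
  moves to a zero-weight target; this is modelled by assigning it the zero
  (sub-stochastic) vector, the lost mass contributing reward 0.\<close>

definition gp_val ::
  "'s set \<Rightarrow> 'a set \<Rightarrow> ('s \<times> 'a \<times> 's) set \<Rightarrow> 's set \<Rightarrow> ('s \<Rightarrow> 'a \<Rightarrow> 's \<Rightarrow> real) \<Rightarrow> bool" where
  "gp_val S A Delta T val \<longleftrightarrow>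
     (\<forall>s\<in>S - T. \<forall>a\<in>A.
        (succs Delta s a \<noteq> {} \<longrightarrow>
           (\<forall>s'. (s' \<in> succs Delta s a \<longrightarrow> val s a s' > 0) \<and>
                 (s' \<notin> succs Delta s a \<longrightarrow> val s a s' = 0)) \<and>
           sum (val s a) (succs Delta s a) = 1) \<and>
        (succs Delta s a = {} \<longrightarrow> (\<forall>s'. val s a s' = 0)))"

fun reach_within ::
  "'s set \<Rightarrow> 's set \<Rightarrow> ('s \<Rightarrow> 'a \<Rightarrow> 's \<Rightarrow> real) \<Rightarrow> ('s \<Rightarrow> 'a) \<Rightarrow> 's \<Rightarrow> nat \<Rightarrow> 's \<Rightarrow> real" where
  "reach_within S T val sigma t 0 s = (if s = t then 1 else 0)"
| "reach_within S T val sigma t (Suc k) s =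
     (if s \<in> T then (if s = t then 1 else 0)
      else (\<Sum>s'\<in>S. val s (sigma s) s' * reach_within S T val sigma t k s'))"

definition reach_prob ::
  "'s set \<Rightarrow> 's set \<Rightarrow> ('s \<Rightarrow> 'a \<Rightarrow> 's \<Rightarrow> real) \<Rightarrow> ('s \<Rightarrow> 'a) \<Rightarrow> 's \<Rightarrow> 's \<Rightarrow> real" where
  "reach_prob S T val sigma s t = (SUP k. reach_within S T val sigma t k s)"

definition Rew_state ::
  "'s set \<Rightarrow> 's set \<Rightarrow> ('s \<Rightarrow> real) \<Rightarrow> ('s \<Rightarrow> 'a \<Rightarrow> 's \<Rightarrow> real) \<Rightarrow> ('s \<Rightarrow> 'a) \<Rightarrow> 's \<Rightarrow> real" where
  "Rew_state S T rho val sigma s = (\<Sum>t\<in>T. rho t * reach_prob S T val sigma s t)"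

definition vertices :: "'s set \<Rightarrow> 'a set \<Rightarrow> 's set \<Rightarrow> ('s + ('s \<times> 'a)) set" where
  "vertices S A T = Inl ` S \<union> Inr ` ((S - T) \<times> A)"

definition Rew_vertex ::
  "'s set \<Rightarrow> 's set \<Rightarrow> ('s \<Rightarrow> real) \<Rightarrow> ('s \<Rightarrow> 'a \<Rightarrow> 's \<Rightarrow> real) \<Rightarrow> ('s \<Rightarrow> 'a)
     \<Rightarrow> ('s + ('s \<times> 'a)) \<Rightarrow> real" where
  "Rew_vertex S T rho val sigma v =
     (case v of Inl s \<Rightarrow> Rew_state S T rho val sigma s
              | Inr (s, a) \<Rightarrow> (\<Sum>s'\<in>S. val s a s' * Rew_state S T rho val sigma s'))"

definition Rew_opt ::
  "'s set \<Rightarrow> 'a set \<Rightarrow> 's set \<Rightarrow> ('s \<Rightarrow> real) \<Rightarrow> ('s \<Rightarrow> 'a \<Rightarrow> 's \<Rightarrow> real)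
     \<Rightarrow> ('s + ('s \<times> 'a)) \<Rightarrow> real" where
  "Rew_opt S A T rho val v =
     Max ((\<lambda>sigma. Rew_vertex S T rho val sigma v) ` ((S - T) \<rightarrow>\<^sub>E A))"

definition never_worse ::
  "'s set \<Rightarrow> 'a set \<Rightarrow> ('s \<times> 'a \<times> 's) set \<Rightarrow> 's set \<Rightarrow> ('s \<Rightarrow> real)
     \<Rightarrow> ('s + ('s \<times> 'a)) \<Rightarrow> ('s + ('s \<times> 'a)) set \<Rightarrow> bool" where
  "never_worse S A Delta T rho v W \<longleftrightarrow>
     (\<forall>val. gp_val S A Delta T val \<longrightarrow>
        (\<exists>w\<in>W. Rew_opt S A T rho val v \<le> Rew_opt S A T rho val w))"

end

theory Submission
  imports Defs
begin

text \<open>Both never-worse relations quantify over all graph-preserving valuations, so it suffices to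
  translate valuations between the two models such that optimal values correspond through a
  strictly increasing map. Optimal values are pinned down by Bellman certificates: nonnegative
  functions that are superharmonic for every action, harmonic for one strategy, vanish on the
  traps of that strategy and equal the weights on the targets; policy iteration shows that one
  exists for every valuation.

  In \<open>\<N>\<close> the fresh action turns \<open>t\<^sub>n, \<dots>, t\<^sub>0\<close> into a ladder that moves down one rung or exits to
  \<open>fin\<close>; from rung \<open>i\<close> it reaches \<open>fin\<close> with a probability \<open>r\<^sub>i\<close> that increases in \<open>i\<close> and
  vanishes at \<open>i = 0\<close>. Hence, for a valuation of \<open>\<N>\<close>, the optimal values of \<open>\<N>\<close> on the vertices
  of \<open>\<M>\<close> are the optimal values \<open>U\<close> of \<open>\<M>\<close> with the weights \<open>r\<^sub>i\<close>. Pick a strictly increasing \<open>\<phi>\<close>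
  with \<open>\<phi>(r\<^sub>i) = \<rho>(t\<^sub>i)\<close> and reweight every distribution of \<open>\<M>\<close>, keeping its support, so that the
  expectation of \<open>\<phi> \<circ> U\<close> is \<open>\<phi>\<close> of the expectation of \<open>U\<close>: under the new valuation the optimal
  values of \<open>\<M>\<close> are \<open>\<phi> \<circ> U\<close>. Conversely, given a valuation of \<open>\<M>\<close>, scale \<open>\<rho>\<close> into \<open>[0, 1)\<close> and
  choose the ladder probabilities so that rung \<open>i\<close> reaches \<open>fin\<close> with the scaled weight of \<open>t\<^sub>i\<close>:
  the optimal values of \<open>\<N>\<close> are then those of \<open>\<M>\<close> times a positive constant.\<close>

section \<open>Weighted averages\<close>

lemma weighted_avg_le:
  fixes p f :: "'x \<Rightarrow> real"
  assumes "finite X" "\<And>y. y \<in> X \<Longrightarrow> 0 \<le> p y" "sum p X \<le> 1" "0 \<le> m"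
    and "\<And>y. y \<in> X \<Longrightarrow> 0 < p y \<Longrightarrow> f y \<le> m"
  shows "(\<Sum>y\<in>X. p y * f y) \<le> m"
proof -
  have "p y * f y \<le> p y * m" if "y \<in> X" for y
    using assms(2,5)[OF that] by (cases "p y = 0") (simp_all add: mult_left_mono)
  then have "(\<Sum>y\<in>X. p y * f y) \<le> (\<Sum>y\<in>X. p y * m)"
    by (rule sum_mono)
  also have "\<dots> = m * sum p X"
    by (simp add: sum_distrib_left mult.commute)
  also have "\<dots> \<le> m"
    using assms(3,4) by (rule mult_left_le)
  finally show ?thesis .
qed

lemma weighted_avg_eq_max:
  fixes p f :: "'x \<Rightarrow> real"
  assumes "finite X" "\<And>y. y \<in> X \<Longrightarrow> 0 \<le> p y" "sum p X \<le> 1" "0 \<le> m"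
    and le: "\<And>y. y \<in> X \<Longrightarrow> 0 < p y \<Longrightarrow> f y \<le> m"
    and avg: "m \<le> (\<Sum>y\<in>X. p y * f y)"
    and "y \<in> X" "0 < p y"
  shows "f y = m"
proof -
  have nonneg: "0 \<le> p z * (m - f z)" if "z \<in> X" for z
    using assms(2)[OF that] le[OF that] by (cases "p z = 0") simp_all
  have "(\<Sum>z\<in>X. p z * (m - f z)) = m * sum p X - (\<Sum>z\<in>X. p z * f z)"
    by (simp add: right_diff_distrib sum_subtractf sum_distrib_left mult.commute)
  also have "\<dots> \<le> 0"
    using avg mult_left_le[OF assms(3,4)] by linarith
  moreover have "0 \<le> (\<Sum>z\<in>X. p z * (m - f z))"
    by (rule sum_nonneg) (rule nonneg)
  ultimately have "(\<Sum>z\<in>X. p z * (m - f z)) = 0"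
    by linarith
  then have "\<forall>z\<in>X. p z * (m - f z) = 0"
    using sum_nonneg_eq_0_iff[of X "\<lambda>z. p z * (m - f z)"] assms(1) nonneg by blast
  then show ?thesis
    using assms(7,8) by fastforce
qed

lemma weighted_mean_eq_if_le_mean:
  fixes p f :: "'x \<Rightarrow> real"
  assumes "finite X" "\<And>x. x \<in> X \<Longrightarrow> 0 < p x" "sum p X = 1"
    and le: "\<And>x. x \<in> X \<Longrightarrow> f x \<le> (\<Sum>x\<in>X. p x * f x)" and "x \<in> X"
  shows "f x = (\<Sum>x\<in>X. p x * f x)"
proof -
  define y where "y = (\<Sum>x\<in>X. p x * f x)"
  have nonneg: "0 \<le> p z * (y - f z)" if "z \<in> X" for z
    using assms(2)[OF that] le[OF that] unfolding y_def by simp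
  have "(\<Sum>z\<in>X. p z * (y - f z)) = y * sum p X - y"
    by (simp add: y_def right_diff_distrib sum_subtractf sum_distrib_right mult.commute)
  then have "(\<Sum>z\<in>X. p z * (y - f z)) = 0"
    using assms(3) by simp
  then have "p x * (y - f x) = 0"
    using sum_nonneg_eq_0_iff[of X "\<lambda>z. p z * (y - f z)"] assms(1,5) nonneg by blast
  then show ?thesis
    using assms(2)[OF assms(5)] unfolding y_def[symmetric] by simp
qed

lemma weighted_mean_dichotomy:
  fixes p f :: "'x \<Rightarrow> real"
  assumes "finite X" "\<And>x. x \<in> X \<Longrightarrow> 0 < p x" "sum p X = 1"
  defines "y \<equiv> \<Sum>x\<in>X. p x * f x"
  shows "(\<forall>x\<in>X. f x = y) \<or> ((\<exists>x\<in>X. f x < y) \<and> (\<exists>x\<in>X. y < f x))"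
proof (cases "(\<exists>x\<in>X. f x < y) \<and> (\<exists>x\<in>X. y < f x)")
  case False
  have below: "\<forall>x\<in>X. f x = y" if "\<forall>x\<in>X. f x \<le> y"
    using weighted_mean_eq_if_le_mean[OF assms(1-3)] that unfolding y_def by blast
  have above: "\<forall>x\<in>X. f x = y" if "\<forall>x\<in>X. y \<le> f x"
  proof
    fix x assume "x \<in> X"
    have mean: "(\<Sum>x\<in>X. p x * - f x) = - y"
      by (simp add: y_def sum_negf)
    then have "- f x = - y"
      using weighted_mean_eq_if_le_mean[OF assms(1-3), of "\<lambda>x. - f x" x] that \<open>x \<in> X\<close> by simp
    then show "f x = y"
      by simp
  qed
  from False have "(\<forall>x\<in>X. f x \<le> y) \<or> (\<forall>x\<in>X. y \<le> f x)"
    by (auto simp: not_less)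
  then show ?thesis
    using below above by blast
qed simp

lemma exists_distribution_with_mean:
  fixes p g :: "'x \<Rightarrow> real"
  assumes fin: "finite X" and pos: "\<And>x. x \<in> X \<Longrightarrow> 0 < p x" and sum1: "sum p X = 1"
    and y: "(\<forall>x\<in>X. g x = y) \<or> ((\<exists>x\<in>X. g x < y) \<and> (\<exists>x\<in>X. y < g x))"
  shows "\<exists>d. (\<forall>x\<in>X. 0 < d x) \<and> sum d X = 1 \<and> (\<Sum>x\<in>X. d x * g x) = y"
proof (cases "(\<Sum>x\<in>X. p x * g x) = y")
  case True
  then show ?thesis
    using pos sum1 by blast
next
  case False
  define mu where "mu = (\<Sum>x\<in>X. p x * g x)"
  have "mu = y" if "\<forall>x\<in>X. g x = y"
    using that sum1 by (simp add: mu_def sum_distrib_right[symmetric])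
  then obtain z where z: "z \<in> X" and between: "(mu < y \<and> y < g z) \<or> (g z < y \<and> y < mu)"
    using y False unfolding mu_def by (metis linorder_neqE_linordered_idom)
  text \<open>Shift the mean from \<open>mu\<close> to \<open>y\<close> by moving mass \<open>l\<close> onto the point \<open>z\<close>.\<close>
  define l where "l = (y - mu) / (g z - mu)"
  have l: "0 < l" "l < 1" "l * (g z - mu) = y - mu"
    using between unfolding l_def by (auto simp: divide_simps)
  define d where "d x = (1 - l) * p x + (if x = z then l else 0)" for x
  have "\<forall>x\<in>X. 0 < d x"
    using l pos unfolding d_def by (simp add: add_pos_nonneg)
  moreover have "sum d X = 1"
    using fin z sum1 l by (simp add: d_def sum.distrib sum_distrib_left[symmetric])
  moreover have "(\<Sum>x\<in>X. d x * g x) = y"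
  proof -
    have "(\<Sum>x\<in>X. (1 - l) * p x * g x) = (1 - l) * mu"
      by (simp add: mu_def sum_distrib_left mult.assoc)
    moreover have "(\<Sum>x\<in>X. (if x = z then l else 0) * g x) = (\<Sum>x\<in>X. if x = z then l * g z else 0)"
      by (rule sum.cong) auto
    then have "(\<Sum>x\<in>X. (if x = z then l else 0) * g x) = l * g z"
      using fin z by simp
    ultimately have "(\<Sum>x\<in>X. d x * g x) = (1 - l) * mu + l * g z"
      by (simp add: d_def distrib_right sum.distrib)
    then show ?thesis
      using l(3) by (simp add: algebra_simps)
  qed
  ultimately show ?thesis
    by blast
qed

lemma exists_distribution_with_transformed_mean:
  fixes p f :: "'x \<Rightarrow> real" and phi :: "real \<Rightarrow> real"
  assumes "finite X" "\<And>x. x \<in> X \<Longrightarrow> 0 < p x" "sum p X = 1" "strict_mono phi"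
  shows "\<exists>d. (\<forall>x\<in>X. 0 < d x) \<and> sum d X = 1 \<and>
           (\<Sum>x\<in>X. d x * phi (f x)) = phi (\<Sum>x\<in>X. p x * f x)"
proof -
  have "(\<forall>x\<in>X. phi (f x) = phi (\<Sum>x\<in>X. p x * f x)) \<or>
        ((\<exists>x\<in>X. phi (f x) < phi (\<Sum>x\<in>X. p x * f x)) \<and>
         (\<exists>x\<in>X. phi (\<Sum>x\<in>X. p x * f x) < phi (f x)))"
    using weighted_mean_dichotomy[OF assms(1-3), of f] strict_mono_less[OF assms(4)] by auto
  then show ?thesis
    using exists_distribution_with_mean[OF assms(1-3), of "\<lambda>x. phi (f x)"] by blast
qed

section \<open>Expected values, traps and value certificates\<close>

definition expect_next ::
  "'s set \<Rightarrow> ('s \<Rightarrow> 'a \<Rightarrow> 's \<Rightarrow> real) \<Rightarrow> 's \<Rightarrow> 'a \<Rightarrow> ('s \<Rightarrow> real) \<Rightarrow> real" where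
  "expect_next S val s a f = (\<Sum>s'\<in>S. val s a s' * f s')"

lemma expect_next_diff:
  "expect_next S val s a (\<lambda>x. f x - g x) = expect_next S val s a f - expect_next S val s a g"
  by (simp add: expect_next_def right_diff_distrib sum_subtractf)

lemma expect_next_cmult:
  "expect_next S val s a (\<lambda>x. c * f x) = c * expect_next S val s a f"
  by (simp add: expect_next_def sum_distrib_left mult.left_commute)

definition vertex_value ::
  "'s set \<Rightarrow> ('s \<Rightarrow> 'a \<Rightarrow> 's \<Rightarrow> real) \<Rightarrow> ('s \<Rightarrow> real) \<Rightarrow> 's + 's \<times> 'a \<Rightarrow> real" where
  "vertex_value S val f v = (case v of Inl s \<Rightarrow> f s | Inr (s, a) \<Rightarrow> expect_next S val s a f)"

lemma Rew_vertex_eq_vertex_value: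
  "Rew_vertex S T rho val sigma = vertex_value S val (Rew_state S T rho val sigma)"
  by (simp add: fun_eq_iff Rew_vertex_def vertex_value_def expect_next_def split: sum.split)

lemma vertex_value_comp:
  assumes "x \<in> vertices S A T"
    and "\<And>s a. s \<in> S - T \<Longrightarrow> a \<in> A \<Longrightarrow>
           expect_next S val' s a (phi \<circ> f) = phi (expect_next S val s a f)"
  shows "vertex_value S val' (phi \<circ> f) x = phi (vertex_value S val f x)"
  using assms by (auto simp: vertices_def vertex_value_def)

definition trap :: "'s set \<Rightarrow> 's set \<Rightarrow> ('s \<Rightarrow> 'a \<Rightarrow> 's \<Rightarrow> real) \<Rightarrow> ('s \<Rightarrow> 'a) \<Rightarrow> 's set \<Rightarrow> bool" where
  "trap S T val sigma C \<longleftrightarrow> C \<subseteq> S - T \<and> (\<forall>s\<in>C. \<forall>s'\<in>S. 0 < val s (sigma s) s' \<longrightarrow> s' \<in> C)"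

lemma trap_cong_strategy:
  assumes "\<And>s. s \<in> C \<Longrightarrow> sigma s = sigma' s"
  shows "trap S T val sigma C \<longleftrightarrow> trap S T val sigma' C"
  using assms by (auto simp: trap_def)

lemma trap_fun_upd:
  assumes "s0 \<notin> C"
  shows "trap S T val (sigma(s0 := a)) C \<longleftrightarrow> trap S T val sigma C"
  using assms by (intro trap_cong_strategy) auto

lemma trap_cong_support:
  assumes "\<And>s a s'. s \<in> S - T \<Longrightarrow> a \<in> A \<Longrightarrow> s' \<in> S \<Longrightarrow> 0 < val s a s' \<longleftrightarrow> 0 < val' s a s'"
    and "sigma \<in> (S - T) \<rightarrow>\<^sub>E A"
  shows "trap S T val sigma C \<longleftrightarrow> trap S T val' sigma C"
  using assms unfolding trap_def by (metis PiE_mem subsetD)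

text \<open>With \<open>f = rho\<close> on the targets, a certificate is the optimal value and \<open>sigma\<close> an
  optimal strategy (\<open>Rew_opt_certificate\<close>). Without the condition on traps the optimality
  equations also have spurious solutions, positive on sets of states that never reach a target.\<close>

definition value_certificate ::
  "'s set \<Rightarrow> 'a set \<Rightarrow> 's set \<Rightarrow> ('s \<Rightarrow> 'a \<Rightarrow> 's \<Rightarrow> real) \<Rightarrow> ('s \<Rightarrow> 'a) \<Rightarrow> ('s \<Rightarrow> real) \<Rightarrow> bool"
  where
  "value_certificate S A T val sigma f \<longleftrightarrow>
     sigma \<in> (S - T) \<rightarrow>\<^sub>E A \<and> (\<forall>s\<in>S. 0 \<le> f s) \<and>
     (\<forall>s\<in>S - T. \<forall>a\<in>A. expect_next S val s a f \<le> f s) \<and>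
     (\<forall>s\<in>S - T. f s = expect_next S val s (sigma s) f) \<and>
     (\<forall>C. trap S T val sigma C \<longrightarrow> (\<forall>s\<in>C. f s = 0))"

lemma value_certificateD:
  assumes "value_certificate S A T val sigma f"
  shows "sigma \<in> (S - T) \<rightarrow>\<^sub>E A" and "\<And>s. s \<in> S \<Longrightarrow> 0 \<le> f s"
    and "\<And>s a. s \<in> S - T \<Longrightarrow> a \<in> A \<Longrightarrow> expect_next S val s a f \<le> f s"
    and "\<And>s. s \<in> S - T \<Longrightarrow> f s = expect_next S val s (sigma s) f"
    and "\<And>C s. trap S T val sigma C \<Longrightarrow> s \<in> C \<Longrightarrow> f s = 0"
  using assms unfolding value_certificate_def by blast+

lemma value_certificate_transfer:
  assumes cert: "value_certificate S A T val sigma f"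
    and phi: "strict_mono phi" "phi 0 = 0"
    and support: "\<And>s a s'. s \<in> S - T \<Longrightarrow> a \<in> A \<Longrightarrow> s' \<in> S \<Longrightarrow>
                    0 < val s a s' \<longleftrightarrow> 0 < val' s a s'"
    and expect: "\<And>s a. s \<in> S - T \<Longrightarrow> a \<in> A \<Longrightarrow>
                   expect_next S val' s a (phi \<circ> f) = phi (expect_next S val s a f)"
  shows "value_certificate S A T val' sigma (phi \<circ> f)"
proof -
  note sigma = value_certificateD(1)[OF cert]
  have phi_le: "phi x \<le> phi y \<longleftrightarrow> x \<le> y" for x y
    using strict_mono_less_eq[OF phi(1)] .
  show ?thesis
    unfolding value_certificate_def
  proof (intro conjI ballI allI impI)
    show "sigma \<in> (S - T) \<rightarrow>\<^sub>E A"
      by (rule sigma)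
    show "0 \<le> (phi \<circ> f) s" if "s \<in> S" for s
      using value_certificateD(2)[OF cert that] phi_le[of 0] phi(2) by simp
    show "expect_next S val' s a (phi \<circ> f) \<le> (phi \<circ> f) s" if "s \<in> S - T" "a \<in> A" for s a
      using value_certificateD(3)[OF cert that] by (simp add: expect[OF that] phi_le)
    show "(phi \<circ> f) s = expect_next S val' s (sigma s) (phi \<circ> f)" if "s \<in> S - T" for s
      using value_certificateD(4)[OF cert that] by (simp add: expect[OF that PiE_mem[OF sigma that]])
    show "(phi \<circ> f) s = 0" if "trap S T val' sigma C" "s \<in> C" for C s
      using value_certificateD(5)[OF cert, of C s] that phi(2) trap_cong_support[OF support sigma]
      by simp
  qed
qed

section \<open>Graph-preserving valuations\<close>

lemma gp_valI:
  assumes "\<And>s a s'. s \<in> S - T \<Longrightarrow> a \<in> A \<Longrightarrow> s' \<in> succs Delta s a \<Longrightarrow> 0 < val s a s'"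
    and "\<And>s a s'. s \<in> S - T \<Longrightarrow> a \<in> A \<Longrightarrow> s' \<notin> succs Delta s a \<Longrightarrow> val s a s' = 0"
    and "\<And>s a. s \<in> S - T \<Longrightarrow> a \<in> A \<Longrightarrow> succs Delta s a \<noteq> {} \<Longrightarrow>
           sum (val s a) (succs Delta s a) = 1"
  shows "gp_val S A Delta T val"
  using assms unfolding gp_val_def by blast

lemma gp_valD:
  assumes "gp_val S A Delta T val" "s \<in> S - T" "a \<in> A"
  shows "s' \<in> succs Delta s a \<Longrightarrow> 0 < val s a s'"
    and "s' \<notin> succs Delta s a \<Longrightarrow> val s a s' = 0"
    and "succs Delta s a \<noteq> {} \<Longrightarrow> sum (val s a) (succs Delta s a) = 1"
  using assms unfolding gp_val_def by blast+

lemma gp_val_pos_iff: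
  assumes "gp_val S A Delta T val" "s \<in> S - T" "a \<in> A"
  shows "0 < val s a s' \<longleftrightarrow> s' \<in> succs Delta s a"
  using gp_valD(1,2)[OF assms, of s'] by (cases "s' \<in> succs Delta s a") auto

lemma gp_val_nonneg:
  assumes "gp_val S A Delta T val" "s \<in> S - T" "a \<in> A"
  shows "0 \<le> val s a s'"
  using gp_valD(1,2)[OF assms, of s'] by (cases "s' \<in> succs Delta s a") auto

lemma gp_val_restrict:
  assumes gp: "gp_val S' A' Delta' T' val" and sub: "S - T \<subseteq> S' - T'" "A \<subseteq> A'"
    and succs: "\<And>s a. s \<in> S - T \<Longrightarrow> a \<in> A \<Longrightarrow> succs Delta' s a = succs Delta s a"
  shows "gp_val S A Delta T val"
proof (rule gp_valI)
  fix s a s' assume sa: "s \<in> S - T" "a \<in> A"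
  then have sa': "s \<in> S' - T'" "a \<in> A'"
    using sub by auto
  show "s' \<in> succs Delta s a \<Longrightarrow> 0 < val s a s'"
    using gp_valD(1)[OF gp sa'] succs[OF sa] by simp
  show "s' \<notin> succs Delta s a \<Longrightarrow> val s a s' = 0"
    using gp_valD(2)[OF gp sa'] succs[OF sa] by simp
  show "succs Delta s a \<noteq> {} \<Longrightarrow> sum (val s a) (succs Delta s a) = 1"
    using gp_valD(3)[OF gp sa'] succs[OF sa] by simp
qed

section \<open>Rewards of a fixed strategy\<close>

locale substochastic_mdp =
  fixes S :: "'s set" and A :: "'a set" and T :: "'s set"
    and val :: "'s \<Rightarrow> 'a \<Rightarrow> 's \<Rightarrow> real" and rho :: "'s \<Rightarrow> real"
  assumes finite_S: "finite S" and T_subset: "T \<subseteq> S"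
    and finite_A: "finite A" and A_nonempty: "A \<noteq> {}"
    and val_nonneg: "\<And>s a s'. s \<in> S - T \<Longrightarrow> a \<in> A \<Longrightarrow> 0 \<le> val s a s'"
    and val_row_sum: "\<And>s a. s \<in> S - T \<Longrightarrow> a \<in> A \<Longrightarrow> sum (val s a) S \<le> 1"
    and rho_nonneg: "\<And>t. t \<in> T \<Longrightarrow> 0 \<le> rho t"
begin

abbreviation Rew :: "('s \<Rightarrow> 'a) \<Rightarrow> 's \<Rightarrow> real" where
  "Rew sigma \<equiv> Rew_state S T rho val sigma"

definition reward_within :: "('s \<Rightarrow> 'a) \<Rightarrow> nat \<Rightarrow> 's \<Rightarrow> real" where
  "reward_within sigma k s = (\<Sum>t\<in>T. rho t * reach_within S T val sigma t k s)"

lemma finite_T: "finite T"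
  using finite_S T_subset by (rule finite_subset[rotated])

lemma expect_next_mono:
  assumes "s \<in> S - T" "a \<in> A" "\<And>s'. s' \<in> S \<Longrightarrow> f s' \<le> g s'"
  shows "expect_next S val s a f \<le> expect_next S val s a g"
  unfolding expect_next_def
  by (intro sum_mono mult_left_mono) (use assms val_nonneg in auto)

lemma expect_next_le:
  assumes "s \<in> S - T" "a \<in> A" "0 \<le> m" "\<And>s'. s' \<in> S \<Longrightarrow> 0 < val s a s' \<Longrightarrow> f s' \<le> m"
  shows "expect_next S val s a f \<le> m"
  unfolding expect_next_def
  using weighted_avg_le[OF finite_S] val_nonneg[OF assms(1,2)] val_row_sum[OF assms(1,2)] assms(3,4)
  by blast

lemma vertex_value_mono:
  assumes "x \<in> vertices S A T" "\<And>s. s \<in> S \<Longrightarrow> f s \<le> g s"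
  shows "vertex_value S val f x \<le> vertex_value S val g x"
  using assms expect_next_mono by (auto simp: vertices_def vertex_value_def)

lemma reach_within_bounds:
  assumes sigma: "sigma \<in> (S - T) \<rightarrow>\<^sub>E A" and "s \<in> S"
  shows "0 \<le> reach_within S T val sigma t k s \<and> reach_within S T val sigma t k s \<le> 1"
  using assms(2)
proof (induction k arbitrary: s)
  case (Suc k)
  show ?case
  proof (cases "s \<in> T")
    case False
    then have sa: "s \<in> S - T" "sigma s \<in> A"
      using Suc.prems PiE_mem[OF sigma] by auto
    have "(\<Sum>s'\<in>S. val s (sigma s) s' * reach_within S T val sigma t k s') \<le> 1"
      using expect_next_le[OF sa, of 1] Suc.IH by (simp add: expect_next_def)
    moreover have "0 \<le> (\<Sum>s'\<in>S. val s (sigma s) s' * reach_within S T val sigma t k s')"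
      using Suc.IH val_nonneg[OF sa] by (simp add: sum_nonneg)
    ultimately show ?thesis
      using False by simp
  qed simp
qed simp

lemma reach_within_mono:
  assumes sigma: "sigma \<in> (S - T) \<rightarrow>\<^sub>E A" and "t \<in> T" "s \<in> S"
  shows "reach_within S T val sigma t k s \<le> reach_within S T val sigma t (Suc k) s"
  using assms(3)
proof (induction k arbitrary: s)
  case 0
  show ?case
  proof (cases "s \<in> T")
    case False
    then have sa: "s \<in> S - T" "sigma s \<in> A" and "s \<noteq> t"
      using 0 PiE_mem[OF sigma] \<open>t \<in> T\<close> by auto
    then show ?thesis
      using val_nonneg[OF sa] by (simp add: sum_nonneg)
  qed simp
next
  case (Suc k)
  show ?case
  proof (cases "s \<in> T")
    case False
    then have sa: "s \<in> S - T" "sigma s \<in> A"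
      using Suc.prems PiE_mem[OF sigma] by auto
    show ?thesis
      using expect_next_mono[OF sa, of "reach_within S T val sigma t k"] Suc.IH False
      by (simp add: expect_next_def)
  qed simp
qed

lemma reward_within_tendsto:
  assumes sigma: "sigma \<in> (S - T) \<rightarrow>\<^sub>E A" and "s \<in> S"
  shows "(\<lambda>k. reward_within sigma k s) \<longlonglongrightarrow> Rew sigma s"
proof -
  have "(\<lambda>k. reach_within S T val sigma t k s) \<longlonglongrightarrow> reach_prob S T val sigma s t" if "t \<in> T" for t
    unfolding reach_prob_def
    using reach_within_bounds[OF assms] reach_within_mono[OF sigma that assms(2)]
    by (intro LIMSEQ_incseq_SUP incseq_SucI bdd_aboveI[where M = 1]) auto
  then show ?thesis
    unfolding reward_within_def Rew_state_def by (intro tendsto_sum tendsto_mult_left)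
qed

lemma reward_within_target:
  assumes "s \<in> T"
  shows "reward_within sigma k s = rho s"
proof -
  have "reward_within sigma k s = (\<Sum>t\<in>T. if t = s then rho t else 0)"
    unfolding reward_within_def using assms by (intro sum.cong refl) (cases k, auto)
  then show ?thesis
    using finite_T assms by simp
qed

lemma reward_within_0: "reward_within sigma 0 s = (if s \<in> T then rho s else 0)"
proof (cases "s \<in> T")
  case False
  then show ?thesis
    by (auto simp: reward_within_def intro!: sum.neutral)
qed (simp add: reward_within_target)

lemma reward_within_Suc:
  assumes "s \<notin> T"
  shows "reward_within sigma (Suc k) s = expect_next S val s (sigma s) (reward_within sigma k)"
  using assms
  by (simp add: reward_within_def expect_next_def sum_distrib_left algebra_simps sum.swap[of _ T])

lemma Rew_target:
  assumes "sigma \<in> (S - T) \<rightarrow>\<^sub>E A" "s \<in> T"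
  shows "Rew sigma s = rho s"
  using reward_within_tendsto[OF assms(1), of s] assms(2) T_subset
  by (simp add: reward_within_target LIMSEQ_const_iff subsetD)

lemma Rew_nonneg:
  assumes sigma: "sigma \<in> (S - T) \<rightarrow>\<^sub>E A" and "s \<in> S"
  shows "0 \<le> Rew sigma s"
  using reward_within_tendsto[OF assms] reach_within_bounds[OF assms] rho_nonneg
  by (intro LIMSEQ_le_const) (auto simp: reward_within_def intro!: sum_nonneg)

lemma Rew_harmonic:
  assumes sigma: "sigma \<in> (S - T) \<rightarrow>\<^sub>E A" and "s \<in> S - T"
  shows "Rew sigma s = expect_next S val s (sigma s) (Rew sigma)"
proof -
  have "(\<lambda>k. reward_within sigma (Suc k) s) \<longlonglongrightarrow> Rew sigma s"
    using reward_within_tendsto[OF sigma] assms(2) LIMSEQ_Suc by blast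
  moreover have "(\<lambda>k. expect_next S val s (sigma s) (reward_within sigma k))
                   \<longlonglongrightarrow> expect_next S val s (sigma s) (Rew sigma)"
    unfolding expect_next_def
    by (intro tendsto_sum tendsto_mult_left reward_within_tendsto[OF sigma])
  then have "(\<lambda>k. reward_within sigma (Suc k) s) \<longlonglongrightarrow> expect_next S val s (sigma s) (Rew sigma)"
    using assms(2) by (simp add: reward_within_Suc)
  ultimately show ?thesis
    using LIMSEQ_unique by blast
qed

lemma Rew_le_superharmonic:
  assumes sigma: "sigma \<in> (S - T) \<rightarrow>\<^sub>E A"
    and nonneg: "\<And>s. s \<in> S \<Longrightarrow> 0 \<le> f s" and target: "\<And>s. s \<in> T \<Longrightarrow> rho s \<le> f s"
    and super: "\<And>s. s \<in> S - T \<Longrightarrow> expect_next S val s (sigma s) f \<le> f s"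
    and "s \<in> S"
  shows "Rew sigma s \<le> f s"
proof -
  have "reward_within sigma k s \<le> f s" if "s \<in> S" for k s
    using that
  proof (induction k arbitrary: s)
    case 0
    then show ?case
      using nonneg target by (simp add: reward_within_0)
  next
    case (Suc k)
    show ?case
    proof (cases "s \<in> T")
      case False
      then have sa: "s \<in> S - T" "sigma s \<in> A"
        using Suc.prems PiE_mem[OF sigma] by auto
      show ?thesis
        using expect_next_mono[OF sa, of "reward_within sigma k" f] Suc.IH super[OF sa(1)] False
        by (simp add: reward_within_Suc)
    qed (simp add: reward_within_target target)
  qed
  then show ?thesis
    using reward_within_tendsto[OF sigma \<open>s \<in> S\<close>] \<open>s \<in> S\<close> by (intro LIMSEQ_le_const2) auto
qed

lemma Rew_trap:
  assumes sigma: "sigma \<in> (S - T) \<rightarrow>\<^sub>E A" and C: "trap S T val sigma C" and "s \<in> C"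
  shows "Rew sigma s = 0"
proof -
  have zero: "reward_within sigma k s = 0" if "s \<in> C" for k s
    using that
  proof (induction k arbitrary: s)
    case (Suc k)
    then have sa: "s \<in> S - T" "sigma s \<in> A"
      using C PiE_mem[OF sigma] by (auto simp: trap_def)
    have "val s (sigma s) s' * reward_within sigma k s' = 0" if "s' \<in> S" for s'
      using Suc C that val_nonneg[OF sa, of s'] by (cases "0 < val s (sigma s) s'") (auto simp: trap_def)
    then have "expect_next S val s (sigma s) (reward_within sigma k) = 0"
      unfolding expect_next_def by (intro sum.neutral) blast
    then show ?case
      using sa by (simp add: reward_within_Suc)
  qed (use C in \<open>auto simp: trap_def reward_within_0\<close>)
  moreover have "s \<in> S"
    using C \<open>s \<in> C\<close> by (auto simp: trap_def)
  then have "(\<lambda>k. 0) \<longlonglongrightarrow> Rew sigma s"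
    using reward_within_tendsto[OF sigma \<open>s \<in> S\<close>] zero[OF \<open>s \<in> C\<close>] by simp
  then show ?thesis
    by (simp add: LIMSEQ_const_iff)
qed

section \<open>Optimal values\<close>

lemma max_level_set_trap:
  assumes sigma: "sigma \<in> (S - T) \<rightarrow>\<^sub>E A"
    and B: "B \<subseteq> S" and le: "\<And>x. x \<in> B \<Longrightarrow> f x \<le> m" and m: "0 \<le> m"
    and nontarget: "\<And>x. x \<in> B \<Longrightarrow> f x = m \<Longrightarrow> x \<notin> T"
    and stay: "\<And>x s'. x \<in> B \<Longrightarrow> f x = m \<Longrightarrow> s' \<in> S \<Longrightarrow> 0 < val x (sigma x) s' \<Longrightarrow> s' \<in> B"
    and sub: "\<And>x. x \<in> B \<Longrightarrow> f x = m \<Longrightarrow> m \<le> expect_next S val x (sigma x) f"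
  shows "trap S T val sigma {x \<in> B. f x = m}"
  unfolding trap_def
proof (intro conjI ballI impI)
  show "{x \<in> B. f x = m} \<subseteq> S - T"
    using B nontarget by auto
  fix x s' assume x: "x \<in> {x \<in> B. f x = m}" and s': "s' \<in> S" and pos: "0 < val x (sigma x) s'"
  then have sa: "x \<in> S - T" "sigma x \<in> A"
    using B nontarget PiE_mem[OF sigma] by auto
  have "f s' = m"
  proof (rule weighted_avg_eq_max[OF finite_S val_nonneg[OF sa] val_row_sum[OF sa] m _ _ s' pos])
    show "f y \<le> m" if "y \<in> S" "0 < val x (sigma x) y" for y
      using le stay x that by blast
    show "m \<le> (\<Sum>y\<in>S. val x (sigma x) y * f y)"
      using sub x by (simp add: expect_next_def)
  qed
  then show "s' \<in> {x \<in> B. f x = m}"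
    using stay x s' pos by blast
qed

text \<open>Maximum principle: where \<open>f - Rew sigma\<close> attains a positive maximum it is subharmonic, so
  the set of maximisers is a trap, on which \<open>f \<le> 0 \<le> Rew sigma\<close>.\<close>

lemma subharmonic_le_Rew:
  assumes sigma: "sigma \<in> (S - T) \<rightarrow>\<^sub>E A"
    and sub: "\<And>s. s \<in> S - T \<Longrightarrow> f s \<le> expect_next S val s (sigma s) f"
    and target: "\<And>s. s \<in> T \<Longrightarrow> f s \<le> rho s"
    and trap: "\<And>C s. trap S T val sigma C \<Longrightarrow> s \<in> C \<Longrightarrow> f s \<le> 0"
    and "s \<in> S"
  shows "f s \<le> Rew sigma s"
proof (rule ccontr)
  assume "\<not> f s \<le> Rew sigma s"
  define D where "D x = f x - Rew sigma x" for x
  define m where "m = Max (D ` S)"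
  have le: "D x \<le> m" if "x \<in> S" for x
    using finite_S that by (simp add: m_def)
  have m: "0 < m"
    using le[OF \<open>s \<in> S\<close>] \<open>\<not> f s \<le> Rew sigma s\<close> by (simp add: D_def)
  have "m \<in> D ` S"
    unfolding m_def using finite_S \<open>s \<in> S\<close> by (intro Max_in) auto
  then obtain x0 where x0: "x0 \<in> S" "D x0 = m"
    by auto
  have "trap S T val sigma {x \<in> S. D x = m}"
  proof (rule max_level_set_trap[OF sigma order.refl le less_imp_le[OF m]])
    show nontarget: "x \<notin> T" if "x \<in> S" "D x = m" for x
      using that m target[of x] Rew_target[OF sigma, of x] by (auto simp: D_def)
    show "m \<le> expect_next S val x (sigma x) D" if "x \<in> S" "D x = m" for x
    proof -
      have x: "x \<in> S - T"
        using that nontarget by blast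
      have "expect_next S val x (sigma x) D =
          expect_next S val x (sigma x) f - expect_next S val x (sigma x) (Rew sigma)"
        unfolding D_def[abs_def] by (rule expect_next_diff)
      then show ?thesis
        using that sub[OF x] Rew_harmonic[OF sigma x] by (simp add: D_def)
    qed
  qed
  then have "f x0 \<le> 0"
    using trap x0 by blast
  then show False
    using x0 m Rew_nonneg[OF sigma x0(1)] by (simp add: D_def)
qed

lemma Rew_le_certificate:
  assumes cert: "value_certificate S A T val sigma f" and target: "\<And>t. t \<in> T \<Longrightarrow> f t = rho t"
    and sigma': "sigma' \<in> (S - T) \<rightarrow>\<^sub>E A" and "s \<in> S"
  shows "Rew sigma' s \<le> f s"
  using value_certificateD(2,3)[OF cert] target PiE_mem[OF sigma'] \<open>s \<in> S\<close>
  by (intro Rew_le_superharmonic[OF sigma']) auto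

lemma Rew_eq_certificate:
  assumes cert: "value_certificate S A T val sigma f" and target: "\<And>t. t \<in> T \<Longrightarrow> f t = rho t"
    and "s \<in> S"
  shows "Rew sigma s = f s"
  using Rew_le_certificate[OF cert target value_certificateD(1)[OF cert] \<open>s \<in> S\<close>]
    subharmonic_le_Rew[OF value_certificateD(1)[OF cert]] value_certificateD(4,5)[OF cert] target \<open>s \<in> S\<close>
  by (simp add: order_antisym)

lemma Rew_opt_certificate:
  assumes cert: "value_certificate S A T val sigma f" and target: "\<And>t. t \<in> T \<Longrightarrow> f t = rho t"
    and x: "x \<in> vertices S A T"
  shows "Rew_opt S A T rho val x = vertex_value S val f x"
  unfolding Rew_opt_def Rew_vertex_eq_vertex_value
proof (rule Max_eqI)
  show "finite ((\<lambda>sigma. vertex_value S val (Rew sigma) x) ` ((S - T) \<rightarrow>\<^sub>E A))"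
    using finite_S finite_A by (simp add: finite_PiE)
  show "y \<le> vertex_value S val f x"
    if "y \<in> (\<lambda>sigma. vertex_value S val (Rew sigma) x) ` ((S - T) \<rightarrow>\<^sub>E A)" for y
    using that vertex_value_mono[OF x] Rew_le_certificate[OF cert target] by blast
  have "vertex_value S val (Rew sigma) x = vertex_value S val f x"
    using vertex_value_mono[OF x] Rew_eq_certificate[OF cert target] by (simp add: order_antisym)
  then show "vertex_value S val f x \<in> (\<lambda>sigma. vertex_value S val (Rew sigma) x) ` ((S - T) \<rightarrow>\<^sub>E A)"
    using value_certificateD(1)[OF cert] by force
qed

lemma Rew_max_at_switch_state:
  assumes sigma: "sigma \<in> (S - T) \<rightarrow>\<^sub>E A" and C: "trap S T val (sigma(s0 := a)) C"
    and "s0 \<in> C" "y \<in> C"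
  shows "Rew sigma y \<le> Rew sigma s0"
proof -
  have C_sub: "C \<subseteq> S - T"
    using C by (simp add: trap_def)
  have C_closed: "s' \<in> C" if "x \<in> C" "s' \<in> S" "0 < val x ((sigma(s0 := a)) x) s'" for x s'
    using C that unfolding trap_def by blast
  have "finite C"
    using finite_S C_sub by (auto intro: finite_subset)
  define m where "m = Max (Rew sigma ` C)"
  have le: "Rew sigma x \<le> m" if "x \<in> C" for x
    using \<open>finite C\<close> that by (simp add: m_def)
  have m: "0 \<le> m"
    using le[OF \<open>s0 \<in> C\<close>] Rew_nonneg[OF sigma, of s0] C_sub \<open>s0 \<in> C\<close> by auto
  have "m \<le> Rew sigma s0"
  proof (rule ccontr)
    assume "\<not> m \<le> Rew sigma s0"
    have "trap S T val sigma {x \<in> C. Rew sigma x = m}"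
    proof (rule max_level_set_trap[OF sigma _ le m])
      show "C \<subseteq> S" "\<And>x. x \<in> C \<Longrightarrow> x \<notin> T"
        using C_sub by auto
      show "s' \<in> C" if "x \<in> C" "Rew sigma x = m" "s' \<in> S" "0 < val x (sigma x) s'" for x s'
      proof -
        have "x \<noteq> s0"
          using that(2) \<open>\<not> m \<le> Rew sigma s0\<close> by auto
        then show ?thesis
          using C_closed[OF that(1,3)] that(4) by simp
      qed
      show "m \<le> expect_next S val x (sigma x) (Rew sigma)" if "x \<in> C" "Rew sigma x = m" for x
        using that Rew_harmonic[OF sigma, of x] C_sub by auto
    qed
    moreover have "m \<in> Rew sigma ` C"
      unfolding m_def using \<open>finite C\<close> \<open>s0 \<in> C\<close> by (intro Max_in) auto
    ultimately have "m = 0"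
      using Rew_trap[OF sigma] by blast
    then show False
      using \<open>\<not> m \<le> Rew sigma s0\<close> Rew_nonneg[OF sigma, of s0] C_sub \<open>s0 \<in> C\<close> by auto
  qed
  then show ?thesis
    using le[OF \<open>y \<in> C\<close>] by simp
qed

lemma switch_state_not_in_trap:
  assumes sigma: "sigma \<in> (S - T) \<rightarrow>\<^sub>E A" and s0: "s0 \<in> S - T" and a: "a \<in> A"
    and improves: "Rew sigma s0 < expect_next S val s0 a (Rew sigma)"
    and C: "trap S T val (sigma(s0 := a)) C"
  shows "s0 \<notin> C"
proof
  assume "s0 \<in> C"
  have "expect_next S val s0 a (Rew sigma) \<le> Rew sigma s0"
  proof (rule expect_next_le[OF s0 a Rew_nonneg[OF sigma]])
    show "s0 \<in> S"
      using s0 by simp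
    show "Rew sigma s' \<le> Rew sigma s0" if "s' \<in> S" "0 < val s0 a s'" for s'
    proof (rule Rew_max_at_switch_state[OF sigma C \<open>s0 \<in> C\<close>])
      show "s' \<in> C"
        using C \<open>s0 \<in> C\<close> that unfolding trap_def by fastforce
    qed
  qed
  then show False
    using improves by simp
qed

lemma Rew_switch_improves:
  assumes sigma: "sigma \<in> (S - T) \<rightarrow>\<^sub>E A" and s0: "s0 \<in> S - T" and a: "a \<in> A"
    and improves: "Rew sigma s0 < expect_next S val s0 a (Rew sigma)"
  shows "\<And>s. s \<in> S \<Longrightarrow> Rew sigma s \<le> Rew (sigma(s0 := a)) s"
    and "Rew sigma s0 < Rew (sigma(s0 := a)) s0"
proof -
  have sigma': "sigma(s0 := a) \<in> (S - T) \<rightarrow>\<^sub>E A"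
    using sigma s0 a by (auto simp: PiE_iff extensional_def)
  show le: "Rew sigma s \<le> Rew (sigma(s0 := a)) s" if "s \<in> S" for s
  proof (rule subharmonic_le_Rew[OF sigma' _ _ _ that])
    show "Rew sigma s \<le> expect_next S val s ((sigma(s0 := a)) s) (Rew sigma)" if "s \<in> S - T" for s
    proof (cases "s = s0")
      case False
      then show ?thesis
        using Rew_harmonic[OF sigma that] by simp
    qed (use improves in simp)
    show "Rew sigma s \<le> rho s" if "s \<in> T" for s
      using Rew_target[OF sigma that] by simp
    show "Rew sigma s \<le> 0" if C: "trap S T val (sigma(s0 := a)) C" and "s \<in> C" for C s
    proof -
      have "trap S T val sigma C"
        using C switch_state_not_in_trap[OF assms C] trap_fun_upd by metis
      then show ?thesis
        using Rew_trap[OF sigma _ \<open>s \<in> C\<close>] by simp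
    qed
  qed
  have "expect_next S val s0 a (Rew sigma) \<le> expect_next S val s0 a (Rew (sigma(s0 := a)))"
    by (rule expect_next_mono[OF s0 a le])
  then show "Rew sigma s0 < Rew (sigma(s0 := a)) s0"
    using improves Rew_harmonic[OF sigma' s0] by simp
qed

text \<open>Policy iteration: a strategy maximising \<open>\<Sum>s\<in>S. Rew sigma s\<close> admits no improving switch.\<close>

lemma exists_value_certificate: "\<exists>sigma. value_certificate S A T val sigma (Rew sigma)"
proof -
  define F where "F sigma = (\<Sum>s\<in>S. Rew sigma s)" for sigma
  have fin: "finite ((S - T) \<rightarrow>\<^sub>E A)"
    using finite_S finite_A by (simp add: finite_PiE)
  have "(S - T) \<rightarrow>\<^sub>E A \<noteq> {}"
    using A_nonempty by (simp add: PiE_eq_empty_iff)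
  then have "Max (F ` ((S - T) \<rightarrow>\<^sub>E A)) \<in> F ` ((S - T) \<rightarrow>\<^sub>E A)"
    using fin by (intro Max_in) auto
  then obtain sigma where sigma: "sigma \<in> (S - T) \<rightarrow>\<^sub>E A"
    and "F sigma = Max (F ` ((S - T) \<rightarrow>\<^sub>E A))"
    by auto
  then have max: "F sigma' \<le> F sigma" if "sigma' \<in> (S - T) \<rightarrow>\<^sub>E A" for sigma'
    using fin that by simp
  have super: "expect_next S val s a (Rew sigma) \<le> Rew sigma s" if "s \<in> S - T" "a \<in> A" for s a
  proof (rule ccontr)
    assume "\<not> ?thesis"
    then have improves: "Rew sigma s < expect_next S val s a (Rew sigma)"
      by simp
    have "F sigma < F (sigma(s := a))"
      unfolding F_def
    proof (rule sum_strict_mono_ex1[OF finite_S])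
      show "\<forall>x\<in>S. Rew sigma x \<le> Rew (sigma(s := a)) x"
        using Rew_switch_improves(1)[OF sigma that improves] by blast
      show "\<exists>x\<in>S. Rew sigma x < Rew (sigma(s := a)) x"
        using Rew_switch_improves(2)[OF sigma that improves] that by blast
    qed
    moreover have "sigma(s := a) \<in> (S - T) \<rightarrow>\<^sub>E A"
      using sigma that by (auto simp: PiE_iff extensional_def)
    ultimately show False
      using max[of "sigma(s := a)"] by simp
  qed
  have "value_certificate S A T val sigma (Rew sigma)"
    unfolding value_certificate_def
  proof (intro conjI ballI allI impI)
    show "sigma \<in> (S - T) \<rightarrow>\<^sub>E A"
      by (rule sigma)
  qed (use super Rew_nonneg[OF sigma] Rew_harmonic[OF sigma] Rew_trap[OF sigma] in auto)
  then show ?thesis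
    by blast
qed

end

section \<open>Transforming valuations\<close>

locale mdp_graph =
  fixes S :: "'s set" and A :: "'a set" and Delta :: "('s \<times> 'a \<times> 's) set" and T :: "'s set"
  assumes finite_S: "finite S" and finite_A: "finite A" and A_nonempty: "A \<noteq> {}"
    and T_subset: "T \<subseteq> S" and Delta_subset: "Delta \<subseteq> (S - T) \<times> A \<times> S"
begin

lemma succs_subset: "succs Delta s a \<subseteq> S"
  using Delta_subset by (auto simp: succs_def)

lemma finite_succs: "finite (succs Delta s a)"
  using finite_S succs_subset by (rule finite_subset[rotated])

lemma expect_next_succs:
  assumes "gp_val S A Delta T val" "s \<in> S - T" "a \<in> A"
  shows "expect_next S val s a f = (\<Sum>s'\<in>succs Delta s a. val s a s' * f s')"
  unfolding expect_next_def
  using gp_valD(2)[OF assms] by (intro sum.mono_neutral_right[OF finite_S succs_subset]) auto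

lemma substochastic_mdp_gp_val:
  assumes gp: "gp_val S A Delta T val" and "\<And>t. t \<in> T \<Longrightarrow> 0 \<le> rho t"
  shows "substochastic_mdp S A T val rho"
proof
  show "sum (val s a) S \<le> 1" if "s \<in> S - T" "a \<in> A" for s a
    using expect_next_succs[OF gp that, of "\<lambda>_. 1"] gp_valD(3)[OF gp that]
    by (cases "succs Delta s a = {}") (simp_all add: expect_next_def)
  show "0 \<le> val s a s'" if "s \<in> S - T" "a \<in> A" for s a s'
    using gp_val_nonneg[OF gp that] .
qed (use assms(2) finite_S finite_A A_nonempty T_subset in auto)

lemma exists_gp_val_transformed:
  fixes phi :: "real \<Rightarrow> real"
  assumes gp: "gp_val S A Delta T val" and phi: "strict_mono phi" "phi 0 = 0"
  shows "\<exists>val'. gp_val S A Delta T val' \<and>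
           (\<forall>s\<in>S - T. \<forall>a\<in>A. expect_next S val' s a (phi \<circ> f) = phi (expect_next S val s a f))"
proof -
  define good where "good s a d \<longleftrightarrow>
      (\<forall>x\<in>succs Delta s a. 0 < d x) \<and> sum d (succs Delta s a) = 1 \<and>
      (\<Sum>x\<in>succs Delta s a. d x * phi (f x)) = phi (\<Sum>x\<in>succs Delta s a. val s a x * f x)"
    for s a d
  define d where "d s a = (SOME d. good s a d)" for s a
  have d: "good s a (d s a)" if "s \<in> S - T" "a \<in> A" "succs Delta s a \<noteq> {}" for s a
  proof -
    have "\<exists>d. good s a d"
      unfolding good_def
      by (rule exists_distribution_with_transformed_mean[OF finite_succs _ _ phi(1)])
        (use gp_valD(1,3)[OF gp that(1,2)] that(3) in auto)
    then show ?thesis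
      unfolding d_def by (rule someI_ex)
  qed
  define val' where "val' s a s' = (if s' \<in> succs Delta s a then d s a s' else 0)" for s a s'
  have gp': "gp_val S A Delta T val'"
    by (rule gp_valI) (use d in \<open>auto simp: val'_def good_def\<close>)
  have "expect_next S val' s a (phi \<circ> f) = phi (expect_next S val s a f)"
    if "s \<in> S - T" "a \<in> A" for s a
  proof (cases "succs Delta s a = {}")
    case True
    then show ?thesis
      using phi(2) by (simp add: expect_next_succs[OF gp that] expect_next_succs[OF gp' that])
  next
    case False
    have "(\<Sum>x\<in>succs Delta s a. val' s a x * phi (f x)) = (\<Sum>x\<in>succs Delta s a. d s a x * phi (f x))"
      by (simp add: val'_def)
    then show ?thesis
      using d[OF that False] by (simp add: good_def expect_next_succs[OF gp that] expect_next_succs[OF gp' that])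
  qed
  with gp' show ?thesis
    by blast
qed

lemma Rew_opt_transform:
  fixes phi :: "real \<Rightarrow> real"
  assumes gp: "gp_val S A Delta T val" and cert: "value_certificate S A T val sigma f"
    and phi: "strict_mono phi" "phi 0 = 0" and rho: "\<And>t. t \<in> T \<Longrightarrow> rho t = phi (f t)"
  shows "\<exists>val'. gp_val S A Delta T val' \<and>
           (\<forall>x\<in>vertices S A T. Rew_opt S A T rho val' x = phi (vertex_value S val f x))"
proof -
  obtain val' where gp': "gp_val S A Delta T val'" and expect:
    "\<And>s a. s \<in> S - T \<Longrightarrow> a \<in> A \<Longrightarrow> expect_next S val' s a (phi \<circ> f) = phi (expect_next S val s a f)"
    using exists_gp_val_transformed[OF gp phi] by blast
  have cert': "value_certificate S A T val' sigma (phi \<circ> f)"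
    by (rule value_certificate_transfer[OF cert phi _ expect])
      (simp add: gp_val_pos_iff[OF gp] gp_val_pos_iff[OF gp'])
  have "0 \<le> rho t" if "t \<in> T" for t
  proof -
    have "0 \<le> f t"
      using value_certificateD(2)[OF cert] T_subset that by blast
    then show ?thesis
      using rho[OF that] strict_mono_less_eq[OF phi(1), of 0 "f t"] phi(2) by simp
  qed
  then interpret M': substochastic_mdp S A T val' rho
    by (rule substochastic_mdp_gp_val[OF gp'])
  have "Rew_opt S A T rho val' x = phi (vertex_value S val f x)" if "x \<in> vertices S A T" for x
  proof -
    have "Rew_opt S A T rho val' x = vertex_value S val' (phi \<circ> f) x"
      by (rule M'.Rew_opt_certificate[OF cert' _ that]) (simp add: rho)
    then show ?thesis
      using vertex_value_comp[OF that expect] by simp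
  qed
  with gp' show ?thesis
    by blast
qed

end

section \<open>Ladders\<close>

text \<open>The probability of reaching the top from rung \<open>i\<close> of a ladder whose rung \<open>i \<ge> 1\<close> exits to
  the top with probability \<open>p i\<close> and moves down with probability \<open>q i\<close>, and whose rung \<open>0\<close> is a
  dead end.\<close>

fun ladder_prob :: "(nat \<Rightarrow> real) \<Rightarrow> (nat \<Rightarrow> real) \<Rightarrow> nat \<Rightarrow> real" where
  "ladder_prob p q 0 = 0"
| "ladder_prob p q (Suc i) = p (Suc i) + q (Suc i) * ladder_prob p q i"

context
  fixes p q :: "nat \<Rightarrow> real" and n :: nat
  assumes pq: "\<And>i. 1 \<le> i \<Longrightarrow> i \<le> n \<Longrightarrow> 0 < p i \<and> 0 < q i \<and> p i + q i = 1"
begin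

lemma ladder_prob_bounds: "i \<le> n \<Longrightarrow> 0 \<le> ladder_prob p q i \<and> ladder_prob p q i < 1"
proof (induction i)
  case (Suc i)
  then have IH: "0 \<le> ladder_prob p q i" "ladder_prob p q i < 1" and pq': "0 < p (Suc i)" "0 < q (Suc i)"
      "p (Suc i) + q (Suc i) = 1"
    using pq[of "Suc i"] by auto
  have "q (Suc i) * ladder_prob p q i < q (Suc i)" "0 \<le> q (Suc i) * ladder_prob p q i"
    using IH pq'(2) by simp_all
  then have "p (Suc i) + q (Suc i) * ladder_prob p q i < 1"
    "0 \<le> p (Suc i) + q (Suc i) * ladder_prob p q i"
    using pq' by linarith+
  then show ?case
    by simp
qed simp

lemma ladder_prob_strict_mono: "i < n \<Longrightarrow> ladder_prob p q i < ladder_prob p q (Suc i)"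
proof -
  assume "i < n"
  then have r: "ladder_prob p q i < 1" and p: "0 < p (Suc i)" and q: "q (Suc i) = 1 - p (Suc i)"
    using ladder_prob_bounds[of i] pq[of "Suc i"] by auto
  have "ladder_prob p q (Suc i) - ladder_prob p q i = p (Suc i) * (1 - ladder_prob p q i)"
    by (simp only: ladder_prob.simps q) (simp add: algebra_simps)
  moreover have "0 < p (Suc i) * (1 - ladder_prob p q i)"
    using p r by simp
  ultimately show ?thesis
    by simp
qed

end

lemma strict_mono_extend:
  fixes phi :: "real \<Rightarrow> real"
  assumes phi: "strict_mono phi" and "x0 < x1" "phi x0 < y1"
  shows "\<exists>psi. strict_mono psi \<and> (\<forall>x\<le>x0. psi x = phi x) \<and> psi x1 = y1"
proof -
  define c where "c = (y1 - phi x0) / (x1 - x0)"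
  have c: "0 < c" "c * (x1 - x0) = y1 - phi x0"
    using assms(2,3) by (simp_all add: c_def)
  define psi where "psi x = (if x \<le> x0 then phi x else phi x0 + c * (x - x0))" for x
  have "strict_mono psi"
  proof (rule strict_monoI)
    fix x z :: real
    assume "x < z"
    consider "z \<le> x0" | "x \<le> x0" "x0 < z" | "x0 < x"
      by linarith
    then show "psi x < psi z"
    proof cases
      case 1
      then show ?thesis
        using strict_monoD[OF phi \<open>x < z\<close>] \<open>x < z\<close> by (simp add: psi_def)
    next
      case 2
      have "phi x \<le> phi x0"
        using strict_mono_less_eq[OF phi] 2(1) by simp
      moreover have "0 < c * (z - x0)"
        using c(1) 2(2) by simp
      ultimately show ?thesis
        using 2 by (simp add: psi_def)
    next
      case 3
      have "c * (x - x0) < c * (z - x0)"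
        using c(1) \<open>x < z\<close> by simp
      then show ?thesis
        using 3 \<open>x < z\<close> by (simp add: psi_def)
    qed
  qed
  moreover have "\<forall>x\<le>x0. psi x = phi x"
    by (simp add: psi_def)
  moreover have "psi x1 = y1"
    using assms(2) c(2) by (simp add: psi_def)
  ultimately show ?thesis
    by blast
qed

lemma strict_mono_interpolation:
  fixes r y :: "nat \<Rightarrow> real"
  shows "\<forall>i<n. r i < r (Suc i) \<Longrightarrow> \<forall>i<n. y i < y (Suc i) \<Longrightarrow>
    \<exists>phi. strict_mono phi \<and> (\<forall>i\<le>n. phi (r i) = y i)"
proof (induction n)
  case 0
  show ?case
    by (rule exI[of _ "\<lambda>x. x - r 0 + y 0"]) (simp add: strict_mono_def)
next
  case (Suc n)
  then obtain phi where phi: "strict_mono phi" and vals: "\<forall>i\<le>n. phi (r i) = y i"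
    by auto
  have "r n < r (Suc n)" "phi (r n) < y (Suc n)"
    using Suc.prems vals by auto
  then obtain psi where psi: "strict_mono psi" "\<forall>x\<le>r n. psi x = phi x" "psi (r (Suc n)) = y (Suc n)"
    using strict_mono_extend[OF phi] by blast
  have "psi (r i) = y i" if "i \<le> Suc n" for i
  proof (cases "i = Suc n")
    case False
    then have "i \<le> n"
      using that by simp
    have "r i \<le> r n"
    proof (rule lift_Suc_mono_le_ivl[of "{..<n}"])
      show "r j \<le> r (Suc j)" if "j \<in> {..<n}" for j
        using Suc.prems(1) that by (simp add: less_imp_le)
    qed (use \<open>i \<le> n\<close> in auto)
    then show ?thesis
      using psi(2) vals \<open>i \<le> n\<close> by simp
  qed (use psi(3) in simp)
  then show ?case
    using psi(1) by blast
qed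

lemma convex_weight_to_one:
  fixes x y :: real
  assumes "x < y" "y < 1"
  defines "p \<equiv> (y - x) / (1 - x)"
  shows "0 < p" and "p < 1" and "p + (1 - p) * x = y"
proof -
  have x: "0 < 1 - x"
    using assms(1,2) by simp
  show "0 < p" "p < 1"
    using assms x by (simp_all add: divide_simps)
  have "p * (1 - x) = y - x"
    using x by (simp add: p_def)
  then show "p + (1 - p) * x = y"
    by (simp add: algebra_simps)
qed

lemma exists_ladder_probs:
  fixes y :: "nat \<Rightarrow> real"
  assumes y0: "y 0 = 0" and increasing: "\<forall>i<n. y i < y (Suc i)"
  shows "\<exists>c>0. \<exists>p. \<forall>i. 1 \<le> i \<longrightarrow> i \<le> n \<longrightarrow>
           0 < p i \<and> p i < 1 \<and> p i + (1 - p i) * (c * y (i - 1)) = c * y i"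
proof -
  have y_le: "y i \<le> y n" if "i \<le> n" for i
  proof (rule lift_Suc_mono_le_ivl[of "{..<n}"])
    show "y k \<le> y (Suc k)" if "k \<in> {..<n}" for k
      using increasing that by (simp add: less_imp_le)
  qed (use that in auto)
  define c where "c = 1 / (y n + 1)"
  have y_n: "0 \<le> y n"
    using y_le[of 0] y0 by simp
  then have c: "0 < c"
    by (simp add: c_def)
  have less_1: "c * y i < 1" if "i \<le> n" for i
  proof -
    have "c * y i \<le> c * y n"
      using y_le[OF that] c by simp
    also have "\<dots> < 1"
      using y_n by (simp add: c_def)
    finally show ?thesis .
  qed
  have step: "c * y (i - 1) < c * y i" if "1 \<le> i" "i \<le> n" for i
  proof -
    have "y (i - 1) < y i"
      using increasing that by (cases i) auto
    then show ?thesis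
      using c by simp
  qed
  define p where "p i = (c * y i - c * y (i - 1)) / (1 - c * y (i - 1))" for i
  have "0 < p i \<and> p i < 1 \<and> p i + (1 - p i) * (c * y (i - 1)) = c * y i" if "1 \<le> i" "i \<le> n" for i
    using convex_weight_to_one[OF step[OF that] less_1[OF that(2)]] by (simp add: p_def)
  then show ?thesis
    using c by blast
qed

definition ladder_transitions ::
  "('s \<times> 'a \<times> 's) set \<Rightarrow> (nat \<Rightarrow> 's) \<Rightarrow> nat \<Rightarrow> 'a \<Rightarrow> 's \<Rightarrow> 's \<Rightarrow> ('s \<times> 'a \<times> 's) set" where
  "ladder_transitions Delta t n act fin fail =
     Delta \<union> {(t i, act, fin) | i. 1 \<le> i \<and> i \<le> n} \<union> {(t i, act, t (i - 1)) | i. 1 \<le> i \<and> i \<le> n}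
       \<union> {(t 0, act, fail)}"

locale ladder = mdp_graph S A Delta T
  for S :: "'s set" and A :: "'a set" and Delta :: "('s \<times> 'a \<times> 's) set" and T :: "'s set" +
  fixes n :: nat and t :: "nat \<Rightarrow> 's" and fin fail :: 's and act :: 'a
  assumes T_eq: "T = t ` {0..n}" and inj_t: "inj_on t {0..n}"
    and fresh: "fin \<notin> S" "fail \<notin> S" "fin \<noteq> fail" "act \<notin> A"
begin

abbreviation "SN \<equiv> S \<union> {fin, fail}"
abbreviation "AN \<equiv> insert act A"
abbreviation "TN \<equiv> {fin, fail}"
abbreviation "DeltaN \<equiv> ladder_transitions Delta t n act fin fail"
abbreviation "rhoN \<equiv> \<lambda>s. if s = fin then 1 else 0 :: real"

lemma t_in_T: "i \<le> n \<Longrightarrow> t i \<in> T"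
  using T_eq by simp

lemma t_in_S: "i \<le> n \<Longrightarrow> t i \<in> S"
  using t_in_T T_subset by blast

lemma t_eq_iff: "i \<le> n \<Longrightarrow> j \<le> n \<Longrightarrow> t i = t j \<longleftrightarrow> i = j"
  using inj_t by (auto simp: inj_on_def)

lemma SN_minus_TN: "SN - TN = S"
  using fresh by auto

lemma mdp_graph_N: "mdp_graph SN AN DeltaN TN"
proof
  show "DeltaN \<subseteq> (SN - TN) \<times> AN \<times> SN"
    unfolding SN_minus_TN ladder_transitions_def using Delta_subset t_in_S by auto
qed (use finite_S finite_A in auto)

sublocale N: mdp_graph SN AN DeltaN TN
  by (rule mdp_graph_N)

lemma mem_DeltaN:
  "(s, b, s') \<in> DeltaN \<longleftrightarrow> (s, b, s') \<in> Delta \<or>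
     b = act \<and> ((\<exists>i. 1 \<le> i \<and> i \<le> n \<and> s = t i \<and> (s' = fin \<or> s' = t (i - 1))) \<or>
                (s = t 0 \<and> s' = fail))"
  by (auto simp: ladder_transitions_def)

lemma succs_N_action: "s \<in> S - T \<Longrightarrow> a \<in> A \<Longrightarrow> succs DeltaN s a = succs Delta s a"
  using fresh(4) by (auto simp: succs_def mem_DeltaN)

lemma succs_N_act_nontarget: "s \<in> S - T \<Longrightarrow> succs DeltaN s act = {}"
  using fresh(4) t_in_T Delta_subset by (auto simp: succs_def mem_DeltaN)

lemma succs_N_target_action: "s \<in> T \<Longrightarrow> a \<in> A \<Longrightarrow> succs DeltaN s a = {}"
  using fresh(4) Delta_subset by (auto simp: succs_def mem_DeltaN)

lemma succs_N_bottom: "succs DeltaN (t 0) act = {fail}"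
proof -
  have "t 0 \<noteq> t i" if "1 \<le> i" "i \<le> n" for i
    using t_eq_iff[of 0 i] that by simp
  moreover have "(t 0, act, s') \<notin> Delta" for s'
    using Delta_subset t_in_T[of 0] by auto
  ultimately show ?thesis
    by (auto simp: succs_def mem_DeltaN)
qed

lemma succs_N_rung:
  assumes "1 \<le> i" "i \<le> n"
  shows "succs DeltaN (t i) act = {fin, t (i - 1)}"
proof -
  have "(t i, act, s') \<notin> Delta" for s'
    using Delta_subset t_in_T[OF assms(2)] by auto
  moreover have "t i \<noteq> t 0"
    using t_eq_iff[OF assms(2), of 0] assms(1) by simp
  moreover have "t i = t j \<longleftrightarrow> i = j" if "j \<le> n" for j
    using t_eq_iff[OF assms(2) that] .
  ultimately show ?thesis
    using assms by (auto simp: succs_def mem_DeltaN)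
qed

lemma gp_val_N_restrict:
  assumes "gp_val SN AN DeltaN TN val"
  shows "gp_val S A Delta T val"
  by (rule gp_val_restrict[OF assms]) (use SN_minus_TN succs_N_action in auto)

lemma gp_val_N_rung:
  assumes gp: "gp_val SN AN DeltaN TN val" and i: "1 \<le> i" "i \<le> n"
  shows "0 < val (t i) act fin \<and> 0 < val (t i) act (t (i - 1)) \<and>
         val (t i) act fin + val (t i) act (t (i - 1)) = 1"
proof -
  have ti: "t i \<in> SN - TN"
    using t_in_S[OF i(2)] SN_minus_TN by simp
  have "t (i - 1) \<in> S"
    using i(2) by (intro t_in_S) simp
  then have prev: "fin \<noteq> t (i - 1)"
    using fresh(1) by auto
  show ?thesis
    using gp_val_pos_iff[OF gp ti, of act] gp_valD(3)[OF gp ti, of act] succs_N_rung[OF i] prev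
    by simp
qed

lemma ladder_pair_cases:
  assumes "a \<in> AN"
  obtains "a \<in> A" "s \<notin> T" | "a \<in> A" "s \<in> T" | "a = act" "s \<notin> T" | "a = act" "s = t 0"
    | i where "a = act" "1 \<le> i" "i \<le> n" "s = t i"
proof (cases "a = act")
  case True
  show ?thesis
  proof (cases "s \<in> T")
    case False
    then show ?thesis
      using that(3) True by blast
  next
    case sT: True
    then obtain i where "i \<le> n" "s = t i"
      using T_eq by auto
    then show ?thesis
      using that(4) that(5)[of i] True by (cases "i = 0") auto
  qed
qed (use that(1,2) assms in blast)

definition level :: "'s \<Rightarrow> nat" where
  "level s = the_inv_into {0..n} t s"

lemma level_t: "i \<le> n \<Longrightarrow> level (t i) = i"
  using the_inv_into_f_f[OF inj_t] by (simp add: level_def)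

definition lift_value :: "('s \<Rightarrow> real) \<Rightarrow> 's \<Rightarrow> real" where
  "lift_value f s = (if s = fin then 1 else if s = fail then 0 else f s)"

definition lift_strategy :: "('s \<Rightarrow> 'a) \<Rightarrow> 's \<Rightarrow> 'a" where
  "lift_strategy sigma = restrict (\<lambda>s. if s \<in> T then act else sigma s) S"

lemma lift_value_S: "s \<in> S \<Longrightarrow> lift_value f s = f s"
  using fresh by (auto simp: lift_value_def)

context
  fixes val :: "'s \<Rightarrow> 'a \<Rightarrow> 's \<Rightarrow> real"
  assumes gp: "gp_val SN AN DeltaN TN val"
begin

lemma expect_N_empty:
  assumes "s \<in> S" "a \<in> AN" "succs DeltaN s a = {}"
  shows "expect_next SN val s a g = 0"
proof -
  have "s \<in> SN - TN"
    using assms(1) SN_minus_TN by simp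
  then show ?thesis
    using N.expect_next_succs[OF gp _ assms(2)] assms(3) by simp
qed

lemma expect_lift_action:
  assumes sa: "s \<in> S - T" "a \<in> A"
  shows "expect_next SN val s a (lift_value f) = expect_next S val s a f"
proof -
  have "s \<in> SN - TN" "a \<in> AN"
    using sa SN_minus_TN by auto
  then have "expect_next SN val s a (lift_value f) = (\<Sum>s'\<in>succs Delta s a. val s a s' * lift_value f s')"
    using N.expect_next_succs[OF gp] succs_N_action[OF sa] by simp
  also have "\<dots> = (\<Sum>s'\<in>succs Delta s a. val s a s' * f s')"
    by (rule sum.cong[OF refl]) (simp add: lift_value_S subsetD[OF succs_subset])
  also have "\<dots> = expect_next S val s a f"
    using expect_next_succs[OF gp_val_N_restrict[OF gp] sa] by simp
  finally show ?thesis .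
qed

lemma expect_lift_bottom: "expect_next SN val (t 0) act (lift_value f) = 0"
proof -
  have "t 0 \<in> SN - TN"
    using t_in_S[of 0] SN_minus_TN by simp
  then show ?thesis
    using N.expect_next_succs[OF gp, of "t 0" act] fresh(3) by (simp add: succs_N_bottom lift_value_def)
qed

lemma expect_lift_rung:
  assumes i: "1 \<le> i" "i \<le> n"
  shows "expect_next SN val (t i) act (lift_value f) =
         val (t i) act fin + val (t i) act (t (i - 1)) * f (t (i - 1))"
proof -
  have "t (i - 1) \<in> S"
    using i(2) by (intro t_in_S) simp
  then have "t (i - 1) \<noteq> fin" "t (i - 1) \<noteq> fail"
    using fresh by auto
  moreover have "t i \<in> SN - TN"
    using t_in_S[OF i(2)] SN_minus_TN by simp
  ultimately show ?thesis
    using N.expect_next_succs[OF gp, of "t i" act] by (simp add: succs_N_rung[OF i] lift_value_def)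
qed

lemma trap_lift:
  assumes C: "trap SN TN val (lift_strategy sigma) C"
  shows "trap S T val sigma C"
proof -
  have C_S: "C \<subseteq> S"
    using C SN_minus_TN by (simp add: trap_def)
  have closed: "s' \<in> C" if "s \<in> C" "s' \<in> SN" "0 < val s (lift_strategy sigma s) s'" for s s'
    using C that unfolding trap_def by blast
  text \<open>Under \<open>act\<close> every target of the original model leaves \<open>S\<close> with positive probability.\<close>
  have "s \<notin> T" if "s \<in> C" for s
  proof
    assume "s \<in> T"
    then obtain i where i: "i \<le> n" "s = t i"
      using T_eq by auto
    have act: "lift_strategy sigma s = act"
      using \<open>s \<in> T\<close> T_subset by (auto simp: lift_strategy_def)
    have s: "s \<in> SN - TN"
      using \<open>s \<in> T\<close> T_subset SN_minus_TN by auto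
    obtain s' where "s' \<in> succs DeltaN s act" "s' \<notin> S"
      using i fresh succs_N_bottom succs_N_rung[of i] by (cases "i = 0") auto
    moreover have "s' \<in> SN"
      using N.succs_subset \<open>s' \<in> succs DeltaN s act\<close> by blast
    ultimately show False
      using closed[OF that] gp_val_pos_iff[OF gp s, of act] act C_S by auto
  qed
  then show ?thesis
    using C_S closed unfolding trap_def lift_strategy_def by auto
qed

lemma expect_lift_target:
  assumes bottom: "f (t 0) = 0"
    and rung: "\<And>i. 1 \<le> i \<Longrightarrow> i \<le> n \<Longrightarrow>
                 f (t i) = val (t i) act fin + val (t i) act (t (i - 1)) * f (t (i - 1))"
    and "s \<in> T"
  shows "expect_next SN val s act (lift_value f) = lift_value f s"
proof -
  obtain i where i: "i \<le> n" "s = t i"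
    using \<open>s \<in> T\<close> T_eq by auto
  have "expect_next SN val (t i) act (lift_value f) = f (t i)"
  proof (cases "i = 0")
    case True
    then show ?thesis
      using bottom expect_lift_bottom by simp
  next
    case False
    then show ?thesis
      using rung[of i] expect_lift_rung[of i] i(1) by simp
  qed
  then show ?thesis
    using i \<open>s \<in> T\<close> T_subset lift_value_S by auto
qed

lemma expect_lift_le:
  assumes cert: "value_certificate S A T val sigma f" and bottom: "f (t 0) = 0"
    and rung: "\<And>i. 1 \<le> i \<Longrightarrow> i \<le> n \<Longrightarrow>
                 f (t i) = val (t i) act fin + val (t i) act (t (i - 1)) * f (t (i - 1))"
    and s: "s \<in> S" and a: "a \<in> AN"
  shows "expect_next SN val s a (lift_value f) \<le> lift_value f s"
  using a
proof (cases rule: ladder_pair_cases[where s = s])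
  case 1
  then have "s \<in> S - T"
    using s by simp
  then show ?thesis
    using expect_lift_action[OF _ \<open>a \<in> A\<close>] value_certificateD(3)[OF cert _ \<open>a \<in> A\<close>] lift_value_S[OF s]
    by simp
next
  case 2
  then show ?thesis
    using expect_N_empty[OF s a] succs_N_target_action value_certificateD(2)[OF cert s] lift_value_S[OF s]
    by simp
next
  case 3
  then show ?thesis
    using expect_N_empty[OF s a] succs_N_act_nontarget s value_certificateD(2)[OF cert s]
      lift_value_S[OF s] by simp
next
  case 4
  then show ?thesis
    using expect_lift_target[OF bottom rung t_in_T[of 0]] by simp
next
  case (5 i)
  then show ?thesis
    using expect_lift_target[OF bottom rung t_in_T[of i]] by simp
qed

lemma ladder_certificate:
  assumes cert: "value_certificate S A T val sigma f" and bottom: "f (t 0) = 0"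
    and rung: "\<And>i. 1 \<le> i \<Longrightarrow> i \<le> n \<Longrightarrow>
                 f (t i) = val (t i) act fin + val (t i) act (t (i - 1)) * f (t (i - 1))"
  shows "value_certificate SN AN TN val (lift_strategy sigma) (lift_value f)"
  unfolding value_certificate_def SN_minus_TN
proof (intro conjI ballI allI impI)
  note certD = value_certificateD[OF cert]
  show "lift_strategy sigma \<in> S \<rightarrow>\<^sub>E AN"
    using PiE_mem[OF certD(1)] by (auto simp: lift_strategy_def)
  show "0 \<le> lift_value f s" if "s \<in> SN" for s
    using that certD(2) by (auto simp: lift_value_def)
  show "expect_next SN val s a (lift_value f) \<le> lift_value f s" if "s \<in> S" "a \<in> AN" for s a
    using expect_lift_le[OF cert bottom rung that] .
  show "lift_value f s = expect_next SN val s (lift_strategy sigma s) (lift_value f)" if s: "s \<in> S" for s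
  proof (cases "s \<in> T")
    case True
    then show ?thesis
      using expect_lift_target[OF bottom rung] s by (simp add: lift_strategy_def)
  next
    case False
    then have "s \<in> S - T"
      using s by simp
    then show ?thesis
      using expect_lift_action[OF _ PiE_mem[OF certD(1)]] certD(4) lift_value_S[OF s] s False
      by (simp add: lift_strategy_def)
  qed
  show "lift_value f s = 0" if "trap SN TN val (lift_strategy sigma) C" "s \<in> C" for C s
  proof -
    have "trap S T val sigma C"
      using trap_lift[OF that(1)] .
    then have "s \<in> S"
      using that(2) by (auto simp: trap_def)
    then show ?thesis
      using certD(5)[OF \<open>trap S T val sigma C\<close> that(2)] lift_value_S by simp
  qed
qed

lemma Rew_opt_ladder:
  assumes cert: "value_certificate S A T val sigma f" and bottom: "f (t 0) = 0"
    and rung: "\<And>i. 1 \<le> i \<Longrightarrow> i \<le> n \<Longrightarrow>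
                 f (t i) = val (t i) act fin + val (t i) act (t (i - 1)) * f (t (i - 1))"
    and x: "x \<in> vertices S A T"
  shows "Rew_opt SN AN TN rhoN val x = vertex_value S val f x"
proof -
  interpret MN: substochastic_mdp SN AN TN val rhoN
    by (rule N.substochastic_mdp_gp_val[OF gp]) simp
  have "x \<in> vertices SN AN TN"
    using x SN_minus_TN by (auto simp: vertices_def)
  then have "Rew_opt SN AN TN rhoN val x = vertex_value SN val (lift_value f) x"
    using fresh(3) by (intro MN.Rew_opt_certificate[OF ladder_certificate[OF cert bottom rung]])
      (auto simp: lift_value_def)
  also have "\<dots> = vertex_value S val f x"
    using x expect_lift_action by (auto simp: vertices_def vertex_value_def lift_value_S)
  finally show ?thesis .
qed

lemma exists_ladder_certificate:
  defines "r \<equiv> ladder_prob (\<lambda>i. val (t i) act fin) (\<lambda>i. val (t i) act (t (i - 1)))"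
  shows "\<exists>sigma U. value_certificate S A T val sigma U \<and> (\<forall>i\<le>n. U (t i) = r i) \<and>
           (\<forall>x\<in>vertices S A T. Rew_opt SN AN TN rhoN val x = vertex_value S val U x)"
proof -
  interpret M: substochastic_mdp S A T val "\<lambda>s. r (level s)"
    using ladder_prob_bounds[where p = "\<lambda>i. val (t i) act fin" and q = "\<lambda>i. val (t i) act (t (i - 1))"
        and n = n, OF gp_val_N_rung[OF gp]] T_eq level_t
    by (intro substochastic_mdp_gp_val[OF gp_val_N_restrict[OF gp]]) (auto simp: r_def)
  obtain sigma where cert: "value_certificate S A T val sigma (M.Rew sigma)"
    using M.exists_value_certificate by blast
  define U where "U = M.Rew sigma"
  have U_t: "U (t i) = r i" if "i \<le> n" for i
    using M.Rew_target[OF value_certificateD(1)[OF cert] t_in_T[OF that]] level_t[OF that]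
    by (simp add: U_def)
  have "Rew_opt SN AN TN rhoN val x = vertex_value S val U x" if "x \<in> vertices S A T" for x
  proof (rule Rew_opt_ladder[OF cert[folded U_def] _ _ that])
    show "U (t 0) = 0"
      using U_t[of 0] by (simp add: r_def)
    show "U (t i) = val (t i) act fin + val (t i) act (t (i - 1)) * U (t (i - 1))"
      if "1 \<le> i" "i \<le> n" for i
      using that U_t[of i] U_t[of "i - 1"] by (cases i) (simp_all add: r_def)
  qed
  then show ?thesis
    using cert[folded U_def] U_t by blast
qed

end

definition ladder_val :: "('s \<Rightarrow> 'a \<Rightarrow> 's \<Rightarrow> real) \<Rightarrow> (nat \<Rightarrow> real) \<Rightarrow> 's \<Rightarrow> 'a \<Rightarrow> 's \<Rightarrow> real" where
  "ladder_val val p s a s' =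
     (if a \<noteq> act then (if s \<in> T then 0 else val s a s')
      else if s = t 0 then (if s' = fail then 1 else 0)
      else if s \<in> T then
        (if s' = fin then p (level s) else if s' = t (level s - 1) then 1 - p (level s) else 0)
      else 0)"

lemma ladder_val_action: "s \<in> S - T \<Longrightarrow> a \<in> A \<Longrightarrow> ladder_val val p s a s' = val s a s'"
  using fresh(4) by (auto simp: ladder_val_def)

lemma ladder_val_rung:
  assumes "1 \<le> i" "i \<le> n"
  shows "ladder_val val p (t i) act s' =
         (if s' = fin then p i else if s' = t (i - 1) then 1 - p i else 0)"
proof -
  have "t i \<noteq> t 0"
    using t_eq_iff[OF assms(2), of 0] assms(1) by simp
  then show ?thesis
    using t_in_T[OF assms(2)] level_t[OF assms(2)] by (simp add: ladder_val_def)
qed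

lemma gp_val_ladder_val:
  assumes gp: "gp_val S A Delta T val" and p: "\<And>i. 1 \<le> i \<Longrightarrow> i \<le> n \<Longrightarrow> 0 < p i \<and> p i < 1"
  shows "gp_val SN AN DeltaN TN (ladder_val val p)"
proof -
  have "(\<forall>s'. s' \<in> succs DeltaN s a \<longrightarrow> 0 < ladder_val val p s a s') \<and>
        (\<forall>s'. s' \<notin> succs DeltaN s a \<longrightarrow> ladder_val val p s a s' = 0) \<and>
        (succs DeltaN s a \<noteq> {} \<longrightarrow> sum (ladder_val val p s a) (succs DeltaN s a) = 1)"
    if s: "s \<in> S" and a: "a \<in> AN" for s a
    using a
  proof (cases rule: ladder_pair_cases[where s = s])
    case 1
    then have sa: "s \<in> S - T" "a \<in> A"
      using s by auto
    show ?thesis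
      using gp_valD[OF gp sa] by (simp add: succs_N_action[OF sa] ladder_val_action[OF sa])
  next
    case 2
    then show ?thesis
      using fresh(4) by (auto simp: succs_N_target_action ladder_val_def)
  next
    case 3
    then show ?thesis
      using s t_in_T[of 0] by (auto simp: succs_N_act_nontarget ladder_val_def)
  next
    case 4
    then show ?thesis
      by (simp add: succs_N_bottom ladder_val_def)
  next
    case (5 i)
    have "t (i - 1) \<in> S"
      using 5(3) by (intro t_in_S) simp
    then have "t (i - 1) \<noteq> fin"
      using fresh(1) by auto
    then show ?thesis
      using p[OF 5(2,3)] 5 by (auto simp: succs_N_rung ladder_val_rung)
  qed
  then show ?thesis
    using SN_minus_TN by (intro gp_valI) auto
qed

lemma expect_next_ladder_val:
  assumes "s \<in> S - T" "a \<in> A"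
  shows "expect_next S (ladder_val val p) s a ((*) c \<circ> f) = c * expect_next S val s a f"
proof -
  have "expect_next S (ladder_val val p) s a ((*) c \<circ> f) = expect_next S val s a (\<lambda>x. c * f x)"
    using ladder_val_action[OF assms] by (simp add: expect_next_def)
  then show ?thesis
    by (simp add: expect_next_cmult)
qed

lemma value_certificate_ladder_val:
  assumes "value_certificate S A T val sigma f" "0 < c"
  shows "value_certificate S A T (ladder_val val p) sigma ((*) c \<circ> f)"
proof (rule value_certificate_transfer[OF assms(1) _ _ _ expect_next_ladder_val])
  show "strict_mono ((*) c)"
    using assms(2) by (simp add: strict_mono_def)
qed (simp_all add: ladder_val_action)

lemma Rew_opt_ladder_val:
  fixes rho :: "'s \<Rightarrow> real"
  assumes gp: "gp_val S A Delta T val" and rho_nonneg: "\<And>s. s \<in> T \<Longrightarrow> 0 \<le> rho s"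
    and rho_bottom: "rho (t 0) = 0" and c: "0 < c"
    and p: "\<And>i. 1 \<le> i \<Longrightarrow> i \<le> n \<Longrightarrow>
              0 < p i \<and> p i < 1 \<and> p i + (1 - p i) * (c * rho (t (i - 1))) = c * rho (t i)"
    and x: "x \<in> vertices S A T"
  shows "Rew_opt SN AN TN rhoN (ladder_val val p) x = c * Rew_opt S A T rho val x"
proof -
  interpret M: substochastic_mdp S A T val rho
    by (rule substochastic_mdp_gp_val[OF gp rho_nonneg])
  obtain sigma where cert: "value_certificate S A T val sigma (M.Rew sigma)"
    using M.exists_value_certificate by blast
  define U where "U = M.Rew sigma"
  have U_T: "U s = rho s" if "s \<in> T" for s
    using M.Rew_target[OF value_certificateD(1)[OF cert] that] by (simp add: U_def)
  have gpN: "gp_val SN AN DeltaN TN (ladder_val val p)"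
    using p by (intro gp_val_ladder_val[OF gp]) blast
  have "Rew_opt SN AN TN rhoN (ladder_val val p) x = vertex_value S (ladder_val val p) ((*) c \<circ> U) x"
  proof (rule Rew_opt_ladder[OF gpN value_certificate_ladder_val[OF cert[folded U_def] c] _ _ x])
    show "((*) c \<circ> U) (t 0) = 0"
      using U_T[OF t_in_T[of 0]] rho_bottom by simp
    show "((*) c \<circ> U) (t i) = ladder_val val p (t i) act fin +
        ladder_val val p (t i) act (t (i - 1)) * ((*) c \<circ> U) (t (i - 1))" if "1 \<le> i" "i \<le> n" for i
    proof -
      have "t (i - 1) \<in> S"
        using that(2) by (intro t_in_S) simp
      then have "ladder_val val p (t i) act fin = p i" "ladder_val val p (t i) act (t (i - 1)) = 1 - p i"
        using fresh(1) ladder_val_rung[OF that, of val p] by auto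
      moreover have "U (t i) = rho (t i)" "U (t (i - 1)) = rho (t (i - 1))"
        using U_T t_in_T that(2) by simp_all
      ultimately show ?thesis
        using p[OF that] by simp
    qed
  qed
  also have "\<dots> = c * vertex_value S val U x"
    by (rule vertex_value_comp[OF x expect_next_ladder_val])
  also have "\<dots> = c * Rew_opt S A T rho val x"
    using M.Rew_opt_certificate[OF cert[folded U_def] U_T x] by simp
  finally show ?thesis .
qed

context
  fixes rho :: "'s \<Rightarrow> real"
  assumes rho_bottom: "rho (t 0) = 0" and rho_increasing: "\<forall>i<n. rho (t i) < rho (t (Suc i))"
begin

lemma rho_nonneg:
  assumes "s \<in> T"
  shows "0 \<le> rho s"
proof -
  obtain i where "i \<le> n" "s = t i"
    using assms T_eq by auto
  moreover have "rho (t 0) \<le> rho (t i)" if "i \<le> n" for i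
  proof (rule lift_Suc_mono_le_ivl[of "{..<n}"])
    show "rho (t k) \<le> rho (t (Suc k))" if "k \<in> {..<n}" for k
      using rho_increasing that by (simp add: less_imp_le)
  qed (use that in auto)
  ultimately show ?thesis
    using rho_bottom by simp
qed

lemma never_worse_to_ladder:
  assumes v: "v \<in> vertices S A T" and W: "W \<subseteq> vertices S A T"
    and nw: "never_worse S A Delta T rho v W"
  shows "never_worse SN AN DeltaN TN rhoN v W"
  unfolding never_worse_def
proof (intro allI impI)
  fix valN assume gpN: "gp_val SN AN DeltaN TN valN"
  define r where "r = ladder_prob (\<lambda>i. valN (t i) act fin) (\<lambda>i. valN (t i) act (t (i - 1)))"
  obtain sigma U where cert: "value_certificate S A T valN sigma U" and U_t: "\<forall>i\<le>n. U (t i) = r i"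
    and N: "\<forall>x\<in>vertices S A T. Rew_opt SN AN TN rhoN valN x = vertex_value S valN U x"
    using exists_ladder_certificate[OF gpN, folded r_def] by blast
  have "\<forall>i<n. r i < r (Suc i)"
    unfolding r_def
    using ladder_prob_strict_mono[where p = "\<lambda>i. valN (t i) act fin" and q = "\<lambda>i. valN (t i) act (t (i - 1))"
        and n = n, OF gp_val_N_rung[OF gpN]] by blast
  then obtain phi where phi: "strict_mono phi" and phi_r: "\<forall>i\<le>n. phi (r i) = rho (t i)"
    using strict_mono_interpolation[of n r "\<lambda>i. rho (t i)"] rho_increasing by blast
  have phi_0: "phi 0 = 0"
    using phi_r rho_bottom by (auto simp: r_def)
  have rho_U: "rho s = phi (U s)" if "s \<in> T" for s
    using that T_eq phi_r U_t by auto
  obtain val where gp: "gp_val S A Delta T val"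
    and M: "\<forall>x\<in>vertices S A T. Rew_opt S A T rho val x = phi (vertex_value S valN U x)"
    using Rew_opt_transform[OF gp_val_N_restrict[OF gpN] cert phi phi_0 rho_U] by blast
  obtain w where "w \<in> W" and "Rew_opt S A T rho val v \<le> Rew_opt S A T rho val w"
    using nw gp unfolding never_worse_def by blast
  then have "vertex_value S valN U v \<le> vertex_value S valN U w"
    using M v W strict_mono_less_eq[OF phi] by auto
  moreover have "w \<in> vertices S A T"
    using W \<open>w \<in> W\<close> by blast
  ultimately have "Rew_opt SN AN TN rhoN valN v \<le> Rew_opt SN AN TN rhoN valN w"
    using N v by simp
  then show "\<exists>w\<in>W. Rew_opt SN AN TN rhoN valN v \<le> Rew_opt SN AN TN rhoN valN w"
    using \<open>w \<in> W\<close> by blast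
qed

lemma never_worse_from_ladder:
  assumes v: "v \<in> vertices S A T" and W: "W \<subseteq> vertices S A T"
    and nw: "never_worse SN AN DeltaN TN rhoN v W"
  shows "never_worse S A Delta T rho v W"
  unfolding never_worse_def
proof (intro allI impI)
  fix val assume gp: "gp_val S A Delta T val"
  obtain c p where c: "0 < c" and p: "\<And>i. 1 \<le> i \<Longrightarrow> i \<le> n \<Longrightarrow>
      0 < p i \<and> p i < 1 \<and> p i + (1 - p i) * (c * rho (t (i - 1))) = c * rho (t i)"
    using exists_ladder_probs[of "\<lambda>i. rho (t i)", OF rho_bottom rho_increasing] by blast
  have N: "Rew_opt SN AN TN rhoN (ladder_val val p) x = c * Rew_opt S A T rho val x"
    if "x \<in> vertices S A T" for x
    by (rule Rew_opt_ladder_val[where rho = rho, OF gp rho_nonneg rho_bottom c p that])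
  have "gp_val SN AN DeltaN TN (ladder_val val p)"
    using p by (intro gp_val_ladder_val[OF gp]) blast
  then obtain w where "w \<in> W"
    and "Rew_opt SN AN TN rhoN (ladder_val val p) v \<le> Rew_opt SN AN TN rhoN (ladder_val val p) w"
    using nw unfolding never_worse_def by blast
  moreover have "w \<in> vertices S A T"
    using W \<open>w \<in> W\<close> by blast
  ultimately have "Rew_opt S A T rho val v \<le> Rew_opt S A T rho val w"
    using N[OF v] N[of w] c by simp
  then show "\<exists>w\<in>W. Rew_opt S A T rho val v \<le> Rew_opt S A T rho val w"
    using \<open>w \<in> W\<close> by blast
qed

end

end

lemma inj_on_if_strictly_increasing:
  fixes f :: "'s \<Rightarrow> real"
  assumes "\<forall>i<n. f (t i) < f (t (Suc i))"
  shows "inj_on t {0..n}"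
proof (rule inj_onI)
  fix i j assume i: "i \<in> {0..n}" and j: "j \<in> {0..n}" and eq: "t i = t j"
  have less: "f (t k) < f (t l)" if "k < l" "l \<le> n" for k l
  proof (rule lift_Suc_mono_less_ivl[of "{..<n}"])
    show "f (t m) < f (t (Suc m))" if "m \<in> {..<n}" for m
      using assms that by simp
  qed (use that in auto)
  show "i = j"
  proof (rule linorder_cases[of i j])
    assume "i < j"
    then show ?thesis
      using less[of i j] j eq by simp
  next
    assume "j < i"
    then show ?thesis
      using less[of j i] i eq by simp
  qed
qed

theorem theorem2:
  fixes S :: "'s set" and A :: "'a set" and Delta :: "('s \<times> 'a \<times> 's) set"
    and T :: "'s set" and rho :: "'s \<Rightarrow> real"
    and n :: nat and t :: "nat \<Rightarrow> 's"
    and fin fail :: 's and act :: 'a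
    and v :: "'s + ('s \<times> 'a)" and W :: "('s + ('s \<times> 'a)) set"
  assumes M: "wtpMDP S A Delta T rho"
    and T_def: "T = t ` {0..n}"
    and rho0: "rho (t 0) = 0"
    and rho_mono: "\<forall>i<n. rho (t i) < rho (t (Suc i))"
    and fresh: "fin \<notin> S" "fail \<notin> S" "fin \<noteq> fail" "act \<notin> A"
    and v: "v \<in> vertices S A T"
    and W: "W \<subseteq> vertices S A T"
  shows "never_worse S A Delta T rho v W \<longleftrightarrow>
         never_worse (S \<union> {fin, fail}) (insert act A)
           (Delta \<union> {(t i, act, fin) | i. 1 \<le> i \<and> i \<le> n}
                  \<union> {(t i, act, t (i - 1)) | i. 1 \<le> i \<and> i \<le> n}
                  \<union> {(t 0, act, fail)})
           {fin, fail} (\<lambda>s. if s = fin then 1 else 0) v W"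
proof -
  interpret ladder S A Delta T n t fin fail act
  proof
    show "inj_on t {0..n}"
      by (rule inj_on_if_strictly_increasing[where f = rho, OF rho_mono])
  qed (use M T_def fresh in \<open>simp_all add: wtpMDP_def\<close>)
  have "never_worse S A Delta T rho v W \<longleftrightarrow> never_worse SN AN DeltaN TN rhoN v W"
    using never_worse_to_ladder[OF rho0 rho_mono v W] never_worse_from_ladder[OF rho0 rho_mono v W]
    by (rule iffI)
  then show ?thesis
    by (simp only: ladder_transitions_def)
qed

end
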